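(* Let $A,B\in\mathbb{C}^{n\times n}$ with $B$ sectorial. Then $I+AB$ is invertible if there exists $r\ge0$ such that $A$ is $r$-sectorial and $$\bar\psi_r(A)+\bar\phi(B)<\pi,\qquad \underline\psi_r(A)+\underline\phi(B)>-\pi,\qquad \bar\sigma(B)\,r<1.$$
   Context: $\bar\sigma$: largest singular value. Numerical range $\mathcal{W}(B)=\{x^*Bx:\|x\|=1\}$; $B$ is sectorial if $0\notin\mathcal W(B)$, then $B=T^*DT$ with $T$ nonsingular, $D$ diagonal unitary, and the phases $\bar\phi(B)\ge\dots\ge\underline\phi(B)$ are the arguments of the diagonal entries of $D$ chosen with $\bar\phi(B)-\underline\phi(B)<\pi$ and $(\bar\phi(B)+\underline\phi(B))/2\in(-\pi,\pi]$. $\mathcal{DW}(A)=\{(\mathrm{Re}\,x^*Ax,\mathrm{Im}\,x^*Ax,\|Ax\|^2):\|x\|=1\}$, $\mathcal{W}_{\ge r}(A)=\{(p,q):(p,q,h^2)\in\mathcal{DW}(A),\ h\ge r\}$; $A$ is $r$-sectorial if $(0,0)\notin\mathcal{W}_{\ge r}(A)$. For $r$-sectorial $A$ with $r\le\bar\sigma(A)$: $\underline\psi_r(A)=\min\{\angle z:(\mathrm{Re}\,z,\mathrm{Im}\,z)\in\mathcal{W}_{\ge r}(A)\}$, $\bar\psi_r(A)=\max\{\angle z:(\mathrm{Re}\,z,\mathrm{Im}\,z)\in\mathcal{W}_{\ge r}(A)\}$, angles on a branch with $(\underline\psi_r+\bar\psi_r)/2\in(-\pi,\pi]$, $\bar\psi_r-\underline\psi_r\in(0,\pi]$;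 for $r>\bar\sigma(A)$, by convention $\underline\psi_r(A)=+\infty$, $\bar\psi_r(A)=-\infty$. *)

theory Defs
  imports "HOL-Analysis.Analysis"
begin

definition cnj_tr :: "complex^'n^'m \<Rightarrow> complex^'m^'n" where
  "cnj_tr T = (\<chi> i j. cnj (T $ j $ i))"

definition qform :: "complex^'n^'n \<Rightarrow> complex^'n \<Rightarrow> complex" where
  "qform A x = (\<Sum>i\<in>UNIV. cnj (x $ i) * (A *v x) $ i)"

definition num_range :: "complex^'n^'n \<Rightarrow> complex set" where
  "num_range A = {qform A x | x. norm x = 1}"

definition sectorial :: "complex^'n^'n \<Rightarrow> bool" where
  "sectorial B \<longleftrightarrow> 0 \<notin> num_range B"

definition sigma_max :: "complex^'n^'m \<Rightarrow> real" where
  "sigma_max A = onorm (\<lambda>x::complex^'n. A *v x)"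

definition sectorial_decomp :: "complex^'n^'n \<Rightarrow> complex^'n^'n \<Rightarrow> ('n \<Rightarrow> real) \<Rightarrow> bool" where
  "sectorial_decomp B T \<theta> \<longleftrightarrow>
     invertible T \<and>
     B = cnj_tr T ** (\<chi> i j. if i = j then cis (\<theta> i) else 0) ** T \<and>
     Max (range \<theta>) - Min (range \<theta>) < pi \<and>
     - pi < (Max (range \<theta>) + Min (range \<theta>)) / 2 \<and>
     (Max (range \<theta>) + Min (range \<theta>)) / 2 \<le> pi"

definition phase_max :: "complex^'n^'n \<Rightarrow> real" where
  "phase_max B = (SOME m. \<exists>T \<theta>. sectorial_decomp B T \<theta> \<and> m = Max (range \<theta>))"

definition phase_min :: "complex^'n^'n \<Rightarrow> real" where
  "phase_min B = (SOME m. \<exists>T \<theta>. sectorial_decomp B T \<theta> \<and> m = Min (range \<theta>))"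

definition DW :: "complex^'n^'n \<Rightarrow> (real \<times> real \<times> real) set" where
  "DW A = {(Re (qform A x), Im (qform A x), (norm (A *v x))\<^sup>2) | x. norm x = 1}"

definition W_ge :: "real \<Rightarrow> complex^'n^'n \<Rightarrow> (real \<times> real) set" where
  "W_ge r A = {(p, q). \<exists>h. (p, q, h\<^sup>2) \<in> DW A \<and> h \<ge> r}"

definition r_sectorial :: "real \<Rightarrow> complex^'n^'n \<Rightarrow> bool" where
  "r_sectorial r A \<longleftrightarrow> (0, 0) \<notin> W_ge r A"

definition angle_arc :: "(real \<times> real) set \<Rightarrow> real \<Rightarrow> real \<Rightarrow> bool" where
  "angle_arc S a b \<longleftrightarrow>
     a \<le> b \<and> b - a \<le> pi \<and> - pi < (a + b) / 2 \<and> (a + b) / 2 \<le> pi \<and>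
     (\<forall>(p, q)\<in>S. \<exists>t. a \<le> t \<and> t \<le> b \<and> Complex p q = of_real (cmod (Complex p q)) * cis t) \<and>
     (\<exists>(p, q)\<in>S. Complex p q = of_real (cmod (Complex p q)) * cis a) \<and>
     (\<exists>(p, q)\<in>S. Complex p q = of_real (cmod (Complex p q)) * cis b)"

definition psi_min :: "real \<Rightarrow> complex^'n^'n \<Rightarrow> ereal" where
  "psi_min r A = (if r > sigma_max A then \<infinity>
                  else ereal (SOME a. \<exists>b. angle_arc (W_ge r A) a b))"

definition psi_max :: "real \<Rightarrow> complex^'n^'n \<Rightarrow> ereal" where
  "psi_max r A = (if r > sigma_max A then - \<infinity>
                  else ereal (SOME b. \<exists>a. angle_arc (W_ge r A) a b))"

end

theory Submission
  imports Defs
begin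

text \<open>
  If I + A B were singular, some x \<noteq> 0 would satisfy x = - A B x. Put y = B x, u = y / |y| and
  x' = x / |x|. Then |A u| = |x| / |y| > r, because \<sigma>(B) r < 1, and
  u* A u = - (|x| / |y|)^2 cnj (x'* B x'): a point of W_{\<ge>r}(A) is a negative multiple of the conjugate
  of a point of W(B). Their arguments therefore add up to pi modulo 2 pi, which the two angle
  conditions exclude.

  The work lies in showing that the angle functions of the statement mean what they should.
  W_{\<ge>r}(A) is convex: on the span of two unit vectors, x* A x and |A x|^2 are affine functions of
  a point of a ball, and from any point of the ball one can move, keeping x* A x fixed and
  |A x|^2 non-decreasing, to the boundary sphere, whose points are unit vectors. Being also
  compact and free of 0, W_{\<ge>r}(A) lies in an arc of width less than pi with unique endpoints.
  A sectorial B becomes strictly accretive after a rotation; diagonalising its Hermitian and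
  skew-Hermitian parts simultaneously (by induction, maximising a Rayleigh quotient on the
  orthogonal complement) gives B = T* D T, and the phases are the endpoints of the arc of W(B).
\<close>

section \<open>Complex inner product and quadratic forms\<close>

definition cinner :: "complex^'n \<Rightarrow> complex^'n \<Rightarrow> complex" where
  "cinner u w = (\<Sum>i\<in>UNIV. cnj (u $ i) * w $ i)"

lemma qform_cinner: "qform M x = cinner x (M *v x)"
  by (simp add: qform_def cinner_def)

lemma cinner_add_right: "cinner u (w1 + w2) = cinner u w1 + cinner u w2"
  by (simp add: cinner_def distrib_left sum.distrib)

lemma cinner_add_left: "cinner (u1 + u2) w = cinner u1 w + cinner u2 w"
  by (simp add: cinner_def distrib_right sum.distrib)

lemma cinner_diff_right: "cinner u (w1 - w2) = cinner u w1 - cinner u w2"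
  by (simp add: cinner_def right_diff_distrib sum_subtractf)

lemma cinner_scale_right: "cinner u (c *s w) = c * cinner u w"
  by (simp add: cinner_def sum_distrib_left algebra_simps)

lemma cinner_scale_left: "cinner (c *s u) w = cnj c * cinner u w"
  by (simp add: cinner_def sum_distrib_left algebra_simps)

lemma cinner_minus_right: "cinner u (- w) = - cinner u w"
  by (simp add: cinner_def sum_negf)

lemma cinner_commute: "cinner w u = cnj (cinner u w)"
  by (simp add: cinner_def mult.commute)

lemma Re_cinner: "Re (cinner u w) = inner u w"
  by (simp add: cinner_def inner_vec_def Re_sum inner_complex_def)

lemma cinner_self: "cinner u u = of_real ((norm u)^2)"
proof -
  have "Re (cinner u u) = (norm u)^2" by (simp add: Re_cinner power2_norm_eq_inner)
  moreover have "Im (cinner u u) = 0" by (simp add: cinner_def Im_sum)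
  ultimately show ?thesis by (simp add: complex_eq_iff)
qed

lemma cinner_self_eq_1_iff: "cinner u u = 1 \<longleftrightarrow> norm u = 1"
proof -
  have "cinner u u = 1 \<longleftrightarrow> (norm u)^2 = 1" by (metis cinner_self of_real_eq_1_iff)
  also have "\<dots> \<longleftrightarrow> norm u = 1" using power2_eq_iff_nonneg[of "norm u" 1] by simp
  finally show ?thesis .
qed

lemma cinner_cnj_tr: "cinner u (M *v w) = cinner (cnj_tr M *v u) w"
  by (simp add: cinner_def cnj_tr_def matrix_vector_mult_def sum_distrib_left sum_distrib_right
      algebra_simps cnj_sum) (rule sum.swap)

lemma cinner_mult_cnj_tr: "cinner u (cnj_tr M *v w) = cinner (M *v u) w"
  by (simp add: cinner_cnj_tr cnj_tr_def vec_eq_iff)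

lemma cinner_lincomb:
  "cinner (\<alpha> *s p + \<beta> *s q) (\<gamma> *s p' + \<delta> *s q') =
     cnj \<alpha> * \<gamma> * cinner p p' + cnj \<alpha> * \<delta> * cinner p q' + cnj \<beta> * \<gamma> * cinner q p' + cnj \<beta> * \<delta> * cinner q q'"
  by (simp add: cinner_add_left cinner_add_right cinner_scale_left cinner_scale_right algebra_simps)

lemma qform_scale: "qform M (c *s x) = cnj c * c * qform M x"
  unfolding qform_cinner vector_scalar_commute cinner_scale_left cinner_scale_right by simp

lemma qform_scale_of_real: "qform M ((of_real a :: complex) *s w) = of_real (a * a) * qform M w"
  by (simp add: qform_scale)

lemma qform_add: "qform M (v + w) = qform M v + cinner v (M *v w) + cinner w (M *v v) + qform M w"
  unfolding qform_cinner matrix_vector_right_distrib cinner_add_left cinner_add_right by simp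

lemma continuous_on_qform: "continuous_on S (qform (A::complex^'n^'n))"
  unfolding qform_def
  by (intro continuous_intros linear_continuous_on matrix_vector_mul_bounded_linear)

lemma smult_of_real: "(of_real c :: complex) *s x = c *\<^sub>R x"
  by (simp only: vec_eq_iff vector_smult_component vector_scaleR_component) (simp add: scaleR_conv_of_real)

lemma norm_smult_of_real: "norm ((of_real c :: complex) *s x) = \<bar>c\<bar> * norm x"
  by (simp add: smult_of_real)

lemma cnj_mult_self: "cnj z * z = of_real ((cmod z)^2)"
  by (metis complex_norm_square mult.commute of_real_power)

section \<open>Convexity of the restricted numerical range\<close>

definition num_range_ge :: "real \<Rightarrow> complex^'n^'n \<Rightarrow> complex set" where
  "num_range_ge r A = {qform A x | x. norm x = 1 \<and> r \<le> norm (A *v x)}"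

text \<open>For orthonormal u1, u2 the unit vector \<alpha> u1 + \<beta> u2 corresponds to the pure state
  (p, c) = (|\<alpha>|^2, cnj \<alpha> \<beta>), for which |c|^2 = p (1 - p); the next two functions give x* A x and
  |A x|^2 in terms of (p, c). Both are real-affine in (p, c), so they extend to the mixed states
  |c|^2 \<le> p (1 - p), which form a ball in \<real> \<times> \<complex>.\<close>
definition state_qform :: "complex^'n^'n \<Rightarrow> complex^'n \<Rightarrow> complex^'n \<Rightarrow> real \<Rightarrow> complex \<Rightarrow> complex" where
  "state_qform A u1 u2 p c = of_real p * cinner u1 (A *v u1) + c * cinner u1 (A *v u2)
     + cnj c * cinner u2 (A *v u1) + of_real (1 - p) * cinner u2 (A *v u2)"

definition state_normsq :: "complex^'n^'n \<Rightarrow> complex^'n \<Rightarrow> complex^'n \<Rightarrow> real \<Rightarrow> complex \<Rightarrow> real" where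
  "state_normsq A u1 u2 p c = p * Re (cinner (A *v u1) (A *v u1))
     + (1 - p) * Re (cinner (A *v u2) (A *v u2)) + 2 * Re (c * cinner (A *v u1) (A *v u2))"

lemma pure_state_values:
  fixes A :: "complex^'n^'n"
  assumes o: "cinner u1 u1 = 1" "cinner u2 u2 = 1" "cinner u1 u2 = 0"
    and ab: "cnj \<alpha> * \<alpha> = of_real p" "cnj \<beta> * \<beta> = of_real (1 - p)" "cnj \<alpha> * \<beta> = c"
  shows "norm (\<alpha> *s u1 + \<beta> *s u2) = 1"
    and "qform A (\<alpha> *s u1 + \<beta> *s u2) = state_qform A u1 u2 p c"
    and "(norm (A *v (\<alpha> *s u1 + \<beta> *s u2)))^2 = state_normsq A u1 u2 p c"
proof -
  have o21: "cinner u2 u1 = 0" using o(3) by (simp add: cinner_commute[of u2 u1])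
  have c2: "cnj \<beta> * \<alpha> = cnj c" using ab(3) by (simp flip: ab(3) add: mult.commute)
  have "cinner (\<alpha> *s u1 + \<beta> *s u2) (\<alpha> *s u1 + \<beta> *s u2) = 1"
    using o o21 ab by (simp add: cinner_lincomb)
  then show "norm (\<alpha> *s u1 + \<beta> *s u2) = 1" by (simp add: cinner_self_eq_1_iff)
  show "qform A (\<alpha> *s u1 + \<beta> *s u2) = state_qform A u1 u2 p c"
    unfolding qform_cinner matrix_vector_right_distrib vector_scalar_commute cinner_lincomb
      state_qform_def ab c2
    by (simp add: algebra_simps)
  have g21: "cinner (A *v u2) (A *v u1) = cnj (cinner (A *v u1) (A *v u2))" by (rule cinner_commute)
  have "(norm (A *v (\<alpha> *s u1 + \<beta> *s u2)))^2
      = Re (cinner (A *v (\<alpha> *s u1 + \<beta> *s u2)) (A *v (\<alpha> *s u1 + \<beta> *s u2)))"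
    by (simp add: cinner_self)
  also have "\<dots> = state_normsq A u1 u2 p c"
    unfolding matrix_vector_right_distrib vector_scalar_commute cinner_lincomb state_normsq_def
      ab c2 g21
    by (simp add: algebra_simps)
  finally show "(norm (A *v (\<alpha> *s u1 + \<beta> *s u2)))^2 = state_normsq A u1 u2 p c" .
qed

lemma pure_state_factor:
  assumes "0 \<le> p" "p \<le> 1" "(cmod c)^2 = p * (1 - p)"
  obtains \<alpha> \<beta> where "cnj \<alpha> * \<alpha> = of_real p" "cnj \<beta> * \<beta> = of_real (1 - p)" "cnj \<alpha> * \<beta> = c"
proof (cases "p = 0")
  case True
  then have "c = 0" using assms by simp
  then show ?thesis using True that[of 0 1] by simp
next
  case False
  then have pp: "p > 0" using assms by simp
  define \<alpha> where "\<alpha> = complex_of_real (sqrt p)"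
  define \<beta> where "\<beta> = c / complex_of_real (sqrt p)"
  have "cnj \<alpha> * \<alpha> = of_real p" using pp by (simp add: \<alpha>_def flip: of_real_mult)
  moreover have "cnj \<alpha> * \<beta> = c" using pp by (simp add: \<alpha>_def \<beta>_def)
  moreover have "cnj \<beta> * \<beta> = of_real (1 - p)"
  proof -
    have "cnj \<beta> * \<beta> = of_real ((cmod \<beta>)^2)" by (rule cnj_mult_self)
    also have "(cmod \<beta>)^2 = (cmod c)^2 / p" using pp by (simp add: \<beta>_def norm_divide power_divide)
    also have "\<dots> = 1 - p" using pp assms(3) by (simp add: field_simps)
    finally show ?thesis .
  qed
  ultimately show ?thesis using that by blast
qed

lemma mixed_state_iff_cball:
  "(cmod c)^2 \<le> p * (1 - p) \<longleftrightarrow> (p, c) \<in> cball (1/2, 0) (1/2)"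
proof -
  have sq: "sqrt z \<le> 1/2 \<longleftrightarrow> z \<le> 1/4" for z :: real
    by (metis real_sqrt_le_iff real_sqrt_divide real_sqrt_four real_sqrt_one)
  have "dist (1/2, 0) (p, c) = sqrt ((p - 1/2)^2 + (cmod c)^2)"
    by (simp add: dist_Pair_Pair dist_real_def power2_abs power2_commute[of "1/2"])
  then have "(p, c) \<in> cball (1/2, 0) (1/2) \<longleftrightarrow> (p - 1/2)^2 + (cmod c)^2 \<le> 1/4"
    unfolding mem_cball by (simp only: sq)
  moreover have "(p - 1/2)^2 + (cmod c)^2 - 1/4 = (cmod c)^2 - p * (1 - p)"
    by (simp add: power2_eq_square algebra_simps)
  ultimately show ?thesis by linarith
qed

lemma mixed_state_convex:
  assumes "(cmod c1)^2 \<le> p1 * (1 - p1)" "(cmod c2)^2 \<le> p2 * (1 - p2)"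
    and "0 \<le> u" "0 \<le> v" "u + v = 1"
  shows "(cmod (u *\<^sub>R c1 + v *\<^sub>R c2))^2 \<le> (u * p1 + v * p2) * (1 - (u * p1 + v * p2))"
  using convexD[OF convex_cball[of "(1/2 :: real, 0 :: complex)" "1/2"], of "(p1, c1)" "(p2, c2)" u v]
    assms
  by (simp add: mixed_state_iff_cball)

lemma state_values_convex_comb:
  assumes "u + v = 1"
  shows "state_qform A u1 u2 (u * p1 + v * p2) (u *\<^sub>R c1 + v *\<^sub>R c2)
      = u *\<^sub>R state_qform A u1 u2 p1 c1 + v *\<^sub>R state_qform A u1 u2 p2 c2"
    and "state_normsq A u1 u2 (u * p1 + v * p2) (u *\<^sub>R c1 + v *\<^sub>R c2)
      = u * state_normsq A u1 u2 p1 c1 + v * state_normsq A u1 u2 p2 c2"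
proof -
  have u: "u = 1 - v" using assms by simp
  show "state_qform A u1 u2 (u * p1 + v * p2) (u *\<^sub>R c1 + v *\<^sub>R c2)
      = u *\<^sub>R state_qform A u1 u2 p1 c1 + v *\<^sub>R state_qform A u1 u2 p2 c2"
    unfolding u by (simp add: state_qform_def scaleR_conv_of_real algebra_simps)
  show "state_normsq A u1 u2 (u * p1 + v * p2) (u *\<^sub>R c1 + v *\<^sub>R c2)
      = u * state_normsq A u1 u2 p1 c1 + v * state_normsq A u1 u2 p2 c2"
    unfolding u by (simp add: state_normsq_def algebra_simps)
qed

lemma quadratic_has_nonneg_root:
  fixes Q L K :: real
  assumes "Q > 0" "K \<le> 0"
  obtains s where "s \<ge> 0" "Q * s^2 + L * s + K = 0"
proof
  define D where "D = L^2 - 4 * Q * K"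
  have D0: "D \<ge> L^2" using assms by (simp add: D_def mult_nonneg_nonpos)
  then have Dn: "D \<ge> 0" by (meson order_trans zero_le_power2)
  have "sqrt D \<ge> \<bar>L\<bar>" using D0 real_sqrt_abs real_sqrt_le_mono by metis
  then show "(sqrt D - L) / (2 * Q) \<ge> 0" using assms by simp
  have "Q * ((sqrt D - L) / (2 * Q))^2 + L * ((sqrt D - L) / (2 * Q)) + K
      = ((sqrt D)^2 - L^2 + 4 * Q * K) / (4 * Q)"
    using assms by (simp add: field_simps power2_eq_square)
  also have "\<dots> = 0" using Dn by (simp add: D_def)
  finally show "Q * ((sqrt D - L) / (2 * Q))^2 + L * ((sqrt D - L) / (2 * Q)) + K = 0" .
qed

lemma ray_meets_pure_states:
  assumes "(cmod c0)^2 \<le> p0 * (1 - p0)" and "(ep, ec) \<noteq> (0, 0)"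
  obtains s where "s \<ge> 0"
    "(cmod (c0 + of_real s * ec))^2 = (p0 + s * ep) * (1 - (p0 + s * ep))"
proof -
  define Q where "Q = (cmod ec)^2 + ep^2"
  define L where "L = 2 * Re (c0 * cnj ec) - ep + 2 * p0 * ep"
  define K where "K = (cmod c0)^2 - p0 * (1 - p0)"
  have "Q > 0" using assms(2) by (auto simp: Q_def add_pos_nonneg add_nonneg_pos)
  moreover have "K \<le> 0" using assms(1) by (simp add: K_def)
  ultimately obtain s where s: "s \<ge> 0" "Q * s^2 + L * s + K = 0"
    using quadratic_has_nonneg_root by blast
  have "(cmod (c0 + of_real s * ec))^2 - (p0 + s * ep) * (1 - (p0 + s * ep)) = Q * s^2 + L * s + K"
    unfolding Q_def L_def K_def cmod_power2 by (simp add: power2_eq_square algebra_simps)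
  then show ?thesis using s that by simp
qed

text \<open>Dimension count: \<real> \<times> \<complex> has real dimension 3, \<complex> only 2.\<close>
lemma real_linear_map_kernel_nontrivial:
  fixes k1 k2 k3 :: complex
  obtains dp dc where "(dp, dc) \<noteq> (0, 0)" "of_real dp * k1 + dc * k2 + cnj dc * k3 = 0"
proof -
  define w1 :: "real \<times> complex" where "w1 = (Re k1, Complex (Re k2 + Re k3) (Im k3 - Im k2))"
  define w2 :: "real \<times> complex" where "w2 = (Im k1, Complex (Im k2 + Im k3) (Re k2 - Re k3))"
  have "dim {w1, w2} \<le> card {w1, w2}" by (rule dim_le_card') simp
  also have "\<dots> \<le> 2" by (simp add: card_insert_le_m1)
  also have "\<dots> < DIM(real \<times> complex)" by simp
  finally obtain d where d: "d \<noteq> 0" "\<And>y. y \<in> span {w1, w2} \<Longrightarrow> orthogonal d y"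
    using orthogonal_to_subspace_exists by blast
  obtain dp dc where dd: "d = (dp, dc)" by (cases d)
  have "inner d w1 = 0" "inner d w2 = 0"
    using d(2)[of w1] d(2)[of w2] by (simp_all add: span_base orthogonal_def)
  then have "of_real dp * k1 + dc * k2 + cnj dc * k3 = 0"
    by (simp add: dd w1_def w2_def inner_complex_def complex_eq_iff algebra_simps)
  then show ?thesis using d(1) dd that by (auto simp: zero_prod_def)
qed

lemma state_direction_fixing_qform:
  fixes A :: "complex^'n^'n"
  obtains ep ec where "(ep, ec) \<noteq> (0, 0)"
    "\<And>s. state_qform A u1 u2 (p0 + s * ep) (c0 + of_real s * ec) = state_qform A u1 u2 p0 c0"
    "\<And>s. s \<ge> 0 \<Longrightarrow>
       state_normsq A u1 u2 p0 c0 \<le> state_normsq A u1 u2 (p0 + s * ep) (c0 + of_real s * ec)"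
proof -
  define k1 where "k1 = cinner u1 (A *v u1) - cinner u2 (A *v u2)"
  define k2 where "k2 = cinner u1 (A *v u2)"
  define k3 where "k3 = cinner u2 (A *v u1)"
  define g1 where "g1 = Re (cinner (A *v u1) (A *v u1)) - Re (cinner (A *v u2) (A *v u2))"
  define g2 where "g2 = cinner (A *v u1) (A *v u2)"
  have F: "state_qform A u1 u2 (p0 + s * dp) (c0 + of_real s * dc)
      = state_qform A u1 u2 p0 c0 + of_real s * (of_real dp * k1 + dc * k2 + cnj dc * k3)"
    for s dp dc by (simp add: state_qform_def k1_def k2_def k3_def algebra_simps)
  have G: "state_normsq A u1 u2 (p0 + s * dp) (c0 + of_real s * dc)
      = state_normsq A u1 u2 p0 c0 + s * (dp * g1 + 2 * Re (dc * g2))" for s dp dc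
    by (simp add: state_normsq_def g1_def g2_def algebra_simps)
  obtain dp dc where d: "(dp, dc) \<noteq> (0, 0)" "of_real dp * k1 + dc * k2 + cnj dc * k3 = 0"
    using real_linear_map_kernel_nontrivial by blast
  define \<sigma> :: real where "\<sigma> = (if 0 \<le> dp * g1 + 2 * Re (dc * g2) then 1 else -1)"
  have "of_real (\<sigma> * dp) * k1 + (of_real \<sigma> * dc) * k2 + cnj (of_real \<sigma> * dc) * k3
      = of_real \<sigma> * (of_real dp * k1 + dc * k2 + cnj dc * k3)"
    by (simp add: algebra_simps)
  then have kernel: "of_real (\<sigma> * dp) * k1 + (of_real \<sigma> * dc) * k2 + cnj (of_real \<sigma> * dc) * k3 = 0"
    using d(2) by simp
  have "(\<sigma> * dp) * g1 + 2 * Re ((of_real \<sigma> * dc) * g2) = \<sigma> * (dp * g1 + 2 * Re (dc * g2))"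
    by (simp add: algebra_simps)
  also have "\<dots> \<ge> 0" by (simp add: \<sigma>_def)
  finally have ascent: "0 \<le> (\<sigma> * dp) * g1 + 2 * Re ((of_real \<sigma> * dc) * g2)" .
  have "(\<sigma> * dp, of_real \<sigma> * dc) \<noteq> (0, 0)" using d(1) by (simp add: \<sigma>_def)
  moreover have "state_qform A u1 u2 (p0 + s * (\<sigma> * dp)) (c0 + of_real s * (of_real \<sigma> * dc))
      = state_qform A u1 u2 p0 c0" for s
    unfolding F kernel by simp
  moreover have "state_normsq A u1 u2 p0 c0
      \<le> state_normsq A u1 u2 (p0 + s * (\<sigma> * dp)) (c0 + of_real s * (of_real \<sigma> * dc))"
    if "s \<ge> 0" for s
    unfolding G using mult_nonneg_nonneg[OF that ascent] by simp
  ultimately show ?thesis by (rule that)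
qed

text \<open>Moving along a direction that fixes the value of x* A x without decreasing |A x|^2,
  a mixed state reaches a pure one, which is realized by a unit vector.\<close>
lemma mixed_state_realizable:
  fixes A :: "complex^'n^'n"
  assumes o: "cinner u1 u1 = 1" "cinner u2 u2 = 1" "cinner u1 u2 = 0"
    and mixed: "(cmod c0)^2 \<le> p0 * (1 - p0)"
    and r: "0 \<le> r" "r^2 \<le> state_normsq A u1 u2 p0 c0"
  shows "state_qform A u1 u2 p0 c0 \<in> num_range_ge r A"
proof -
  obtain ep ec where e: "(ep, ec) \<noteq> (0, 0)"
    "\<And>s. state_qform A u1 u2 (p0 + s * ep) (c0 + of_real s * ec) = state_qform A u1 u2 p0 c0"
    "\<And>s. s \<ge> 0 \<Longrightarrow>
       state_normsq A u1 u2 p0 c0 \<le> state_normsq A u1 u2 (p0 + s * ep) (c0 + of_real s * ec)"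
    using state_direction_fixing_qform by blast
  obtain s where s: "s \<ge> 0"
    "(cmod (c0 + of_real s * ec))^2 = (p0 + s * ep) * (1 - (p0 + s * ep))"
    using ray_meets_pure_states[OF mixed e(1)] by blast
  define p1 where "p1 = p0 + s * ep"
  define c1 where "c1 = c0 + of_real s * ec"
  have pure: "(cmod c1)^2 = p1 * (1 - p1)" using s(2) by (simp add: p1_def c1_def)
  then have "0 \<le> p1 * (1 - p1)" by (metis zero_le_power2)
  then have "0 \<le> p1" "p1 \<le> 1" by (auto simp: zero_le_mult_iff)
  then obtain \<alpha> \<beta> where ab: "cnj \<alpha> * \<alpha> = of_real p1" "cnj \<beta> * \<beta> = of_real (1 - p1)"
      "cnj \<alpha> * \<beta> = c1"
    using pure_state_factor pure by blast
  define z where "z = \<alpha> *s u1 + \<beta> *s u2"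
  have "r^2 \<le> (norm (A *v z))^2"
    using pure_state_values(3)[OF o ab] r(2) e(3)[OF s(1)] by (simp add: z_def p1_def c1_def)
  then have "r \<le> norm (A *v z)" by (rule power2_le_imp_le) simp
  moreover have "qform A z = state_qform A u1 u2 p0 c0"
    using pure_state_values(2)[OF o ab] e(2) by (simp add: z_def p1_def c1_def)
  ultimately show ?thesis
    using pure_state_values(1)[OF o ab] unfolding num_range_ge_def by (force simp: z_def)
qed

lemma gram_schmidt_step:
  assumes x: "cinner x x = 1" and y: "y \<noteq> cinner x y *s x"
  obtains u2 e where "cinner u2 u2 = 1" "cinner x u2 = 0" "e > 0"
    "y = cinner x y *s x + of_real e *s u2"
proof -
  define y' where "y' = y - cinner x y *s x"
  define e where "e = norm y'"
  have e: "e > 0" using y by (simp add: e_def y'_def)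
  define u2 where "u2 = of_real (1 / e) *s y'"
  have "cinner u2 u2 = 1"
    using e unfolding u2_def cinner_self_eq_1_iff norm_smult_of_real by (simp add: e_def)
  moreover have "cinner x u2 = 0"
    unfolding u2_def y'_def cinner_scale_right cinner_diff_right x by simp
  moreover have "y = cinner x y *s x + of_real e *s u2"
    using e by (simp add: u2_def y'_def vector_smult_assoc flip: of_real_mult)
  ultimately show ?thesis using e that by blast
qed

lemma unit_vectors_as_pure_states:
  fixes A :: "complex^'n^'n"
  assumes xx: "cinner x x = 1" and yy: "cinner y y = 1" and y: "y \<noteq> cinner x y *s x"
  obtains u2 p c where "cinner u2 u2 = 1" "cinner x u2 = 0" "(cmod c)^2 = p * (1 - p)"
    "qform A x = state_qform A x u2 1 0" "(norm (A *v x))^2 = state_normsq A x u2 1 0"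
    "qform A y = state_qform A x u2 p c" "(norm (A *v y))^2 = state_normsq A x u2 p c"
proof -
  define a where "a = cinner x y"
  obtain u2 e where u2: "cinner u2 u2 = 1" "cinner x u2 = 0" "e > 0"
    and yd: "y = a *s x + of_real e *s u2"
    using gram_schmidt_step[OF xx y] unfolding a_def by blast
  define p where "p = (cmod a)^2"
  define c where "c = cnj a * of_real e"
  have "1 = cinner y y" using yy by simp
  also have "\<dots> = of_real (p + e^2)"
    unfolding yd cinner_lincomb xx u2 cinner_commute[of u2 x]
    by (simp add: p_def cnj_mult_self power2_eq_square)
  finally have "p + e^2 = 1" by (metis of_real_eq_1_iff)
  then have pe: "1 - p = e * e" by (simp add: power2_eq_square)
  have ay: "cnj a * a = of_real p" "cnj (of_real e) * of_real e = of_real (1 - p)" "cnj a * of_real e = c"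
    by (simp_all only: pe) (simp_all add: p_def c_def cnj_mult_self)
  have ax: "cnj 1 * 1 = (of_real 1 :: complex)" "cnj 0 * 0 = (of_real (1 - 1) :: complex)"
    "cnj 1 * 0 = (0::complex)"
    by simp_all
  have "(cmod c)^2 = p * (1 - p)" unfolding pe by (simp add: c_def p_def norm_mult power2_eq_square)
  moreover note pure_state_values(2,3)[where A = A, OF xx u2(1,2) ax, simplified]
  moreover note pure_state_values(2,3)[where A = A, OF xx u2(1,2) ay, folded yd]
  ultimately show ?thesis by (rule that[OF u2(1,2)])
qed

text \<open>The segment between two points of W_{\<ge>r}(A) is the image of a segment of mixed states of one
  orthonormal pair, along which |A x|^2 \<ge> r^2 persists because it is affine.\<close>
lemma num_range_ge_convex:
  fixes A :: "complex^'n^'n"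
  assumes r: "0 \<le> r"
  shows "convex (num_range_ge r A)"
proof (rule convexI)
  fix w1 w2 and u v :: real
  assume w1: "w1 \<in> num_range_ge r A" and w2: "w2 \<in> num_range_ge r A"
    and uv: "0 \<le> u" "0 \<le> v" "u + v = 1"
  obtain x where x: "norm x = 1" "r \<le> norm (A *v x)" "w1 = qform A x"
    using w1 by (auto simp: num_range_ge_def)
  obtain y where y: "norm y = 1" "r \<le> norm (A *v y)" "w2 = qform A y"
    using w2 by (auto simp: num_range_ge_def)
  have xx: "cinner x x = 1" and yy: "cinner y y = 1" using x(1) y(1) by (simp_all add: cinner_self_eq_1_iff)
  define a where "a = cinner x y"
  show "u *\<^sub>R w1 + v *\<^sub>R w2 \<in> num_range_ge r A"
  proof (cases "y = a *s x")
    case True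
    have "cnj a * a = 1"
      using yy xx unfolding True cinner_scale_left cinner_scale_right by (simp add: mult.commute)
    then have "w2 = w1" unfolding x(3) y(3) True qform_scale by simp
    then show ?thesis using w1 uv by (simp flip: scaleR_add_left)
  next
    case False
    obtain u2 p c where s: "cinner u2 u2 = 1" "cinner x u2 = 0" "(cmod c)^2 = p * (1 - p)"
      "qform A x = state_qform A x u2 1 0" "(norm (A *v x))^2 = state_normsq A x u2 1 0"
      "qform A y = state_qform A x u2 p c" "(norm (A *v y))^2 = state_normsq A x u2 p c"
      by (rule unit_vectors_as_pure_states[OF xx yy False[unfolded a_def]])
    have "(cmod (u *\<^sub>R 0 + v *\<^sub>R c))^2 \<le> (u * 1 + v * p) * (1 - (u * 1 + v * p))"
      using s(3) by (intro mixed_state_convex[OF _ _ uv]) simp_all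
    moreover have "r^2 \<le> state_normsq A x u2 (u * 1 + v * p) (u *\<^sub>R 0 + v *\<^sub>R c)"
    proof -
      have "r^2 = u * r^2 + v * r^2" using uv(3) by (simp flip: distrib_right)
      also have "\<dots> \<le> u * state_normsq A x u2 1 0 + v * state_normsq A x u2 p c"
        using power_mono[OF x(2) r, of 2] power_mono[OF y(2) r, of 2] s(5,7) uv(1,2)
        by (intro add_mono mult_left_mono) simp_all
      finally show ?thesis by (simp only: state_values_convex_comb[OF uv(3)])
    qed
    ultimately have "state_qform A x u2 (u * 1 + v * p) (u *\<^sub>R 0 + v *\<^sub>R c) \<in> num_range_ge r A"
      using mixed_state_realizable[OF xx s(1,2) _ r] by blast
    then show ?thesis
      by (simp only: state_values_convex_comb[OF uv(3)] x(3) y(3) s(4,6))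
  qed
qed

section \<open>Arcs of angles\<close>

lemma int_eq_0_if_abs_2pi_mult_less:
  assumes "\<bar>2 * pi * real_of_int k\<bar> < 2 * pi"
  shows "k = 0"
proof -
  have "2 * pi * \<bar>real_of_int k\<bar> < 2 * pi * 1" using assms by (simp add: abs_mult)
  then have "\<bar>real_of_int k\<bar> < 1" using pi_gt_zero by (simp only: mult_less_cancel_left_pos)
  then show ?thesis by linarith
qed

lemma cis_add_2pi_int: "cis (x + 2 * pi * real_of_int k) = cis x"
  by (simp flip: cis_mult)

lemma exists_2pi_shift_into_branch:
  fixes m :: real
  obtains k :: int where "- pi < m + 2 * pi * real_of_int k" "m + 2 * pi * real_of_int k \<le> pi"
proof
  define k where "k = floor ((pi - m) / (2 * pi))"
  have "real_of_int k \<le> (pi - m) / (2 * pi)" "(pi - m) / (2 * pi) < real_of_int k + 1"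
    unfolding k_def by linarith+
  then have "2 * pi * real_of_int k \<le> pi - m" "pi - m < 2 * pi * real_of_int k + 2 * pi"
    using pi_gt_zero by (simp_all add: field_simps)
  then show "- pi < m + 2 * pi * real_of_int k" "m + 2 * pi * real_of_int k \<le> pi" by linarith+
qed

lemma polar_angle_unique_mod_2pi:
  assumes "z \<noteq> 0" "z = of_real (cmod z) * cis s" "z = of_real (cmod z) * cis t"
  obtains k :: int where "s = t + 2 * pi * real_of_int k"
proof -
  have "cis s = cis t" using assms by (metis mult_cancel_left norm_eq_zero of_real_eq_0_iff)
  then have "sin s = sin t \<and> cos s = cos t" by (simp add: complex_eq_iff)
  then show ?thesis using sin_cos_eq_iff that by blast
qed

lemma polar_arctan:
  assumes "Re v > 0"
  shows "v = of_real (cmod v) * cis (arctan (Im v / Re v))"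
  by (metis arg_conv_arctan[OF assms] rcis_cmod_Arg rcis_def)

lemma angle_arc_image_iff:
  "angle_arc ((\<lambda>w. (Re w, Im w)) ` S) a b \<longleftrightarrow>
     a \<le> b \<and> b - a \<le> pi \<and> - pi < (a + b) / 2 \<and> (a + b) / 2 \<le> pi \<and>
     (\<forall>w\<in>S. \<exists>t. a \<le> t \<and> t \<le> b \<and> w = of_real (cmod w) * cis t) \<and>
     (\<exists>w\<in>S. w = of_real (cmod w) * cis a) \<and>
     (\<exists>w\<in>S. w = of_real (cmod w) * cis b)"
  by (simp add: angle_arc_def)

lemma angle_arc_member:
  assumes "angle_arc ((\<lambda>w. (Re w, Im w)) ` S) a b" "w \<in> S"
  obtains t where "a \<le> t" "t \<le> b" "w = of_real (cmod w) * cis t"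
  using assms unfolding angle_arc_image_iff by blast

lemma angle_arc_angle_mod_2pi:
  assumes "angle_arc ((\<lambda>w. (Re w, Im w)) ` S) a b" "0 \<notin> S"
    and "w \<in> S" "w = of_real (cmod w) * cis x"
  obtains t k where "a \<le> t" "t \<le> b" "x = t + 2 * pi * real_of_int k"
proof -
  obtain t where t: "a \<le> t" "t \<le> b" "w = of_real (cmod w) * cis t"
    using angle_arc_member[OF assms(1,3)] .
  have "w \<noteq> 0" using assms(2,3) by auto
  then show ?thesis using polar_angle_unique_mod_2pi[OF _ assms(4) t(3)] t(1,2) that by blast
qed

text \<open>Uniqueness needs the strict bound b - a < pi: a set of two opposite points lies on
  two arcs of width pi.\<close>
lemma angle_arc_unique:
  assumes z: "0 \<notin> S"
    and A1: "angle_arc ((\<lambda>w. (Re w, Im w)) ` S) a b"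
    and A2: "angle_arc ((\<lambda>w. (Re w, Im w)) ` S) a' b'"
    and lt: "b - a < pi"
  shows "a' = a \<and> b' = b"
proof -
  note a1 = A1[unfolded angle_arc_image_iff] and a2 = A2[unfolded angle_arc_image_iff]
  obtain s k1 where s: "a \<le> s" "s \<le> b" "a' = s + 2 * pi * real_of_int k1"
    using a2 angle_arc_angle_mod_2pi[OF A1 z] by metis
  obtain u k2 where u: "a \<le> u" "u \<le> b" "b' = u + 2 * pi * real_of_int k2"
    using a2 angle_arc_angle_mod_2pi[OF A1 z] by metis
  have "\<bar>2 * pi * real_of_int (k2 - k1)\<bar> < 2 * pi"
    using s u a2 lt pi_gt_zero by (simp add: algebra_simps; linarith)
  then have k12: "k2 = k1" using int_eq_0_if_abs_2pi_mult_less by fastforce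
  obtain t j where t: "a' \<le> t" "t \<le> b'" "a = t + 2 * pi * real_of_int j"
    using a1 angle_arc_angle_mod_2pi[OF A2 z] by metis
  have "\<bar>2 * pi * real_of_int (j + k1)\<bar> < 2 * pi"
    using s u t k12 lt pi_gt_zero by (simp add: algebra_simps; linarith)
  then have "real_of_int j = - real_of_int k1" using int_eq_0_if_abs_2pi_mult_less by fastforce
  then have sa: "s = a" using s u t k12 by (simp add: algebra_simps)
  obtain t' j' where t': "a' \<le> t'" "t' \<le> b'" "b = t' + 2 * pi * real_of_int j'"
    using a1 angle_arc_angle_mod_2pi[OF A2 z] by metis
  have "\<bar>2 * pi * real_of_int (j' + k1)\<bar> < 2 * pi"
    using s u t' k12 lt pi_gt_zero by (simp add: algebra_simps; linarith)
  then have "real_of_int j' = - real_of_int k1" using int_eq_0_if_abs_2pi_mult_less by fastforce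
  then have ub: "u = b" using s u t' k12 by (simp add: algebra_simps)
  have "\<bar>2 * pi * real_of_int k1\<bar> < 2 * pi"
    using a1 a2 s u sa ub k12 by (simp add: algebra_simps; linarith)
  then have "k1 = 0" by (rule int_eq_0_if_abs_2pi_mult_less)
  then show ?thesis using s u sa ub k12 by simp
qed

lemma continuous_angle_in_half_plane:
  fixes S :: "complex set"
  assumes half: "\<And>w. w \<in> S \<Longrightarrow> Re (cis (- \<gamma>) * w) > 0"
  obtains ang where "continuous_on S ang" "\<And>w. w \<in> S \<Longrightarrow> w = of_real (cmod w) * cis (ang w)"
    "\<And>w. \<gamma> - pi / 2 < ang w \<and> ang w < \<gamma> + pi / 2"
proof
  define rot where "rot w = cis (- \<gamma>) * w" for w
  show "continuous_on S (\<lambda>w. \<gamma> + arctan (Im (rot w) / Re (rot w)))"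
    unfolding rot_def using half by (intro continuous_intros) (auto, fastforce)
  show "\<gamma> - pi / 2 < \<gamma> + arctan (Im (rot w) / Re (rot w)) \<and>
      \<gamma> + arctan (Im (rot w) / Re (rot w)) < \<gamma> + pi / 2" for w
    using arctan_bounded[of "Im (rot w) / Re (rot w)"] by simp
  fix w assume "w \<in> S"
  have "rot w = of_real (cmod (rot w)) * cis (arctan (Im (rot w) / Re (rot w)))"
    using half[OF \<open>w \<in> S\<close>] unfolding rot_def by (rule polar_arctan)
  moreover have "cmod (rot w) = cmod w" by (simp add: rot_def norm_mult)
  moreover have "w = cis \<gamma> * rot w" by (simp add: rot_def cis_mult)
  ultimately show "w = of_real (cmod w) * cis (\<gamma> + arctan (Im (rot w) / Re (rot w)))"
    by (simp add: algebra_simps flip: cis_mult)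
qed

lemma angle_arc_exists_in_half_plane:
  fixes S :: "complex set"
  assumes "compact S" "S \<noteq> {}" and half: "\<And>w. w \<in> S \<Longrightarrow> Re (cis (- \<gamma>) * w) > 0"
  obtains a b where "b - a < pi" "angle_arc ((\<lambda>w. (Re w, Im w)) ` S) a b"
proof -
  obtain ang where cont: "continuous_on S ang"
    and polar0: "\<And>w. w \<in> S \<Longrightarrow> w = of_real (cmod w) * cis (ang w)"
    and bounds: "\<And>w. \<gamma> - pi / 2 < ang w \<and> ang w < \<gamma> + pi / 2"
    using continuous_angle_in_half_plane[OF half] by blast
  have polar: "w = of_real (cmod w) * cis (ang w + 2 * pi * real_of_int k)" if "w \<in> S" for w k
    unfolding cis_add_2pi_int using that by (rule polar0)
  obtain wa where wa: "wa \<in> S" "\<And>w. w \<in> S \<Longrightarrow> ang wa \<le> ang w"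
    using continuous_attains_inf[OF assms(1,2) cont] by blast
  obtain wb where wb: "wb \<in> S" "\<And>w. w \<in> S \<Longrightarrow> ang w \<le> ang wb"
    using continuous_attains_sup[OF assms(1,2) cont] by blast
  obtain k :: int where k: "- pi < (ang wa + ang wb) / 2 + 2 * pi * real_of_int k"
      "(ang wa + ang wb) / 2 + 2 * pi * real_of_int k \<le> pi"
    using exists_2pi_shift_into_branch by blast
  define a where "a = ang wa + 2 * pi * real_of_int k"
  define b where "b = ang wb + 2 * pi * real_of_int k"
  have "b - a < pi" using bounds[of wa] bounds[of wb] by (simp add: a_def b_def)
  moreover have "angle_arc ((\<lambda>w. (Re w, Im w)) ` S) a b"
    unfolding angle_arc_image_iff
  proof (intro conjI)
    show "a \<le> b" using wa wb by (simp add: a_def b_def)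
    show "b - a \<le> pi" using \<open>b - a < pi\<close> by simp
    show "- pi < (a + b) / 2" "(a + b) / 2 \<le> pi" using k by (simp_all add: a_def b_def field_simps)
    show "\<forall>w\<in>S. \<exists>t\<ge>a. t \<le> b \<and> w = complex_of_real (cmod w) * cis t"
    proof
      fix w assume "w \<in> S"
      then show "\<exists>t\<ge>a. t \<le> b \<and> w = complex_of_real (cmod w) * cis t"
        using wa(2)[of w] wb(2)[of w] polar[of w k]
        by (intro exI[of _ "ang w + 2 * pi * real_of_int k"]) (simp add: a_def b_def)
    qed
    show "\<exists>w\<in>S. w = complex_of_real (cmod w) * cis a" using polar wa(1) by (auto simp: a_def)
    show "\<exists>w\<in>S. w = complex_of_real (cmod w) * cis b" using polar wb(1) by (auto simp: b_def)
  qed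
  ultimately show ?thesis by (rule that)
qed

text \<open>A convex set avoiding 0 is separated from 0 by a line, hence lies in an open half-plane.\<close>
lemma angle_arc_exists:
  fixes S :: "complex set"
  assumes "compact S" "convex S" "S \<noteq> {}" "0 \<notin> S"
  obtains a b where "b - a < pi" "angle_arc ((\<lambda>w. (Re w, Im w)) ` S) a b"
proof -
  obtain c b0 where c: "0 < b0" "\<And>x. x \<in> S \<Longrightarrow> inner c x > b0"
    using separating_hyperplane_closed_0[OF assms(2) compact_imp_closed[OF assms(1)] assms(4)] by blast
  have "Re (cis (- Arg c) * w) > 0" if "w \<in> S" for w
  proof -
    have "inner c w = Re (cnj c * w)" by (simp add: inner_complex_def)
    also have "cnj c = of_real (cmod c) * cis (- Arg c)"
      by (metis cis_cnj complex_cnj_complex_of_real complex_cnj_mult rcis_cmod_Arg rcis_def)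
    finally have "inner c w = cmod c * Re (cis (- Arg c) * w)" by (simp add: mult.assoc)
    then show ?thesis using c that by (smt (verit) mult_nonneg_nonpos norm_ge_zero)
  qed
  then show ?thesis using angle_arc_exists_in_half_plane[OF assms(1,3)] that by blast
qed

lemma cis_in_sector:
  assumes "\<bar>\<phi>\<bar> \<le> \<delta>" "\<delta> < pi / 2"
  shows "\<bar>sin \<phi>\<bar> * cos \<delta> \<le> sin \<delta> * cos \<phi>"
proof -
  have "0 \<le> sin (\<delta> - \<phi>)" "0 \<le> sin (\<delta> + \<phi>)" using assms by (auto intro!: sin_ge_zero)
  then have "cos \<delta> * sin \<phi> \<le> sin \<delta> * cos \<phi>" "- (cos \<delta> * sin \<phi>) \<le> sin \<delta> * cos \<phi>"
    by (simp_all add: sin_diff sin_add)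
  then show ?thesis by (auto simp: abs_if algebra_simps)
qed

lemma sector_polar:
  assumes "0 \<le> \<delta>" "\<delta> < pi / 2" "Re v > 0" "\<bar>Im v\<bar> * cos \<delta> \<le> sin \<delta> * Re v"
  obtains t where "\<bar>t\<bar> \<le> \<delta>" "v = of_real (cmod v) * cis t"
proof
  have "cos \<delta> > 0" using assms(1,2) by (intro cos_gt_zero_pi) auto
  have "\<bar>Im v / Re v\<bar> = \<bar>Im v\<bar> / Re v" using assms(3) by (simp add: abs_divide)
  also have "\<dots> \<le> sin \<delta> / cos \<delta>" using assms(3,4) \<open>cos \<delta> > 0\<close> by (simp add: field_simps)
  finally have "\<bar>Im v / Re v\<bar> \<le> tan \<delta>" by (simp add: tan_def)
  then have "Im v / Re v \<le> tan \<delta>" "- (Im v / Re v) \<le> tan \<delta>" by linarith+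
  moreover have "arctan (tan \<delta>) = \<delta>" using assms(1,2) by (intro arctan_tan) auto
  ultimately have "arctan (Im v / Re v) \<le> \<delta>" "arctan (- (Im v / Re v)) \<le> \<delta>"
    by (metis arctan_le_iff)+
  then show "\<bar>arctan (Im v / Re v)\<bar> \<le> \<delta>" by (simp add: arctan_minus)
  show "v = of_real (cmod v) * cis (arctan (Im v / Re v))" using assms(3) by (rule polar_arctan)
qed

text \<open>By cis_in_sector, the sector {|t| \<le> \<delta>} is cut out by inequalities that are linear in the
  point, so it is closed under positive combinations.\<close>
lemma cis_positive_combination_in_sector:
  fixes c :: "'k::finite \<Rightarrow> real"
  assumes c: "\<And>k. c k \<ge> 0" and k0: "c k0 > 0"
    and \<phi>: "\<And>k. \<bar>\<phi> k\<bar> \<le> \<delta>" and \<delta>: "\<delta> < pi / 2"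
  defines "v \<equiv> (\<Sum>k\<in>UNIV. of_real (c k) * cis (\<phi> k))"
  obtains t where "Re v > 0" "\<bar>t\<bar> \<le> \<delta>" "v = of_real (cmod v) * cis t"
proof -
  have Re_v: "Re v = (\<Sum>k\<in>UNIV. c k * cos (\<phi> k))" by (simp add: v_def Re_sum)
  have Im_v: "Im v = (\<Sum>k\<in>UNIV. c k * sin (\<phi> k))" by (simp add: v_def Im_sum)
  have "0 \<le> \<delta>" using \<phi>[of k0] by linarith
  then have cos_\<delta>: "cos \<delta> > 0" using \<delta> by (intro cos_gt_zero_pi) auto
  have cos_ge: "cos \<delta> \<le> cos (\<phi> k)" for k
    using cos_monotone_0_pi_le[of "\<bar>\<phi> k\<bar>" \<delta>] \<phi>[of k] \<delta> by simp
  have "c k0 * cos (\<phi> k0) \<le> Re v" unfolding Re_v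
    using c by (intro member_le_sum)
      (auto intro!: mult_nonneg_nonneg order_trans[OF less_imp_le[OF cos_\<delta>] cos_ge])
  moreover have "c k0 * cos (\<phi> k0) > 0" using k0 cos_ge[of k0] cos_\<delta> by simp
  ultimately have Re_pos: "Re v > 0" by linarith
  have "\<bar>Im v\<bar> \<le> (\<Sum>k\<in>UNIV. c k * \<bar>sin (\<phi> k)\<bar>)"
    unfolding Im_v by (rule order_trans[OF sum_abs]) (simp add: abs_mult c)
  then have "\<bar>Im v\<bar> * cos \<delta> \<le> (\<Sum>k\<in>UNIV. c k * \<bar>sin (\<phi> k)\<bar>) * cos \<delta>"
    using cos_\<delta> by (simp add: mult_right_mono)
  also have "\<dots> \<le> sin \<delta> * Re v"
    unfolding Re_v sum_distrib_left sum_distrib_right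
    by (rule sum_mono) (use mult_left_mono[OF cis_in_sector[OF \<phi> \<delta>] c] in \<open>simp add: mult_ac\<close>)
  finally obtain t where "\<bar>t\<bar> \<le> \<delta>" "v = of_real (cmod v) * cis t"
    using sector_polar[OF \<open>0 \<le> \<delta>\<close> \<delta> Re_pos] by blast
  then show ?thesis using Re_pos that by blast
qed

lemma cis_positive_combination_in_arc:
  fixes c :: "'k::finite \<Rightarrow> real" and \<theta> :: "'k \<Rightarrow> real"
  assumes c: "\<And>k. c k \<ge> 0" and k0: "c k0 > 0"
    and lo: "\<And>k. lo \<le> \<theta> k" and hi: "\<And>k. \<theta> k \<le> hi" and lt: "hi - lo < pi"
  defines "w \<equiv> (\<Sum>k\<in>UNIV. of_real (c k) * cis (\<theta> k))"
  shows "w \<noteq> 0 \<and> (\<exists>t. lo \<le> t \<and> t \<le> hi \<and> w = of_real (cmod w) * cis t)"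
proof -
  define m where "m = (lo + hi) / 2"
  define \<delta> where "\<delta> = (hi - lo) / 2"
  have \<phi>: "\<bar>\<theta> k - m\<bar> \<le> \<delta>" for k
    using lo[of k] hi[of k] unfolding m_def \<delta>_def abs_le_iff by (auto simp: field_simps)
  have "\<delta> < pi / 2" using lt by (simp add: \<delta>_def)
  have rot: "cis (- m) * (of_real (c k) * cis (\<theta> k)) = of_real (c k) * cis (\<theta> k - m)" for k
  proof -
    have "cis (\<theta> k - m) = cis (\<theta> k) * cis (- m)" by (simp add: cis_mult)
    then show ?thesis by (simp add: mult_ac)
  qed
  have v: "cis (- m) * w = (\<Sum>k\<in>UNIV. of_real (c k) * cis (\<theta> k - m))"
    unfolding w_def sum_distrib_left by (rule sum.cong[OF refl]) (rule rot)
  obtain t where t: "Re (cis (- m) * w) > 0" "\<bar>t\<bar> \<le> \<delta>"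
      "cis (- m) * w = of_real (cmod (cis (- m) * w)) * cis t"
    using cis_positive_combination_in_sector[where c = c and \<phi> = "\<lambda>k. \<theta> k - m", OF c k0 \<phi> \<open>\<delta> < pi / 2\<close>]
    unfolding v by blast
  have "cmod (cis (- m) * w) = cmod w" by (simp add: norm_mult)
  have "w = cis m * (cis (- m) * w)" by (simp add: mult.assoc[symmetric] cis_mult)
  also have "\<dots> = of_real (cmod w) * (cis m * cis t)"
    using t(3) \<open>cmod (cis (- m) * w) = cmod w\<close> by (metis mult.left_commute)
  also have "\<dots> = of_real (cmod w) * cis (m + t)" by (simp add: cis_mult)
  finally have "w = of_real (cmod w) * cis (m + t)" .
  moreover have "lo \<le> m + t" "m + t \<le> hi"
    using t(2) unfolding m_def \<delta>_def abs_le_iff by (auto simp: field_simps)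
  moreover have "w \<noteq> 0" using t(1) by auto
  ultimately show ?thesis by blast
qed

section \<open>The restricted numerical range and the angles psi\<close>

lemma num_range_ge_compact: "compact (num_range_ge r (A::complex^'n^'n))"
proof -
  have eq: "num_range_ge r A = qform A ` {x. norm x = 1 \<and> r \<le> norm (A *v x)}"
    by (auto simp: num_range_ge_def)
  have "closed {x::complex^'n. norm x = 1 \<and> r \<le> norm (A *v x)}"
    by (intro closed_Collect_conj closed_Collect_eq closed_Collect_le continuous_intros
        linear_continuous_on matrix_vector_mul_bounded_linear)
  moreover have "bounded {x::complex^'n. norm x = 1 \<and> r \<le> norm (A *v x)}"
    by (rule bounded_subset[of "cball 0 1"]) auto
  ultimately show ?thesis unfolding eq
    by (intro compact_continuous_image continuous_on_qform) (simp add: compact_eq_bounded_closed)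
qed

lemma num_range_eq_num_range_ge_0: "num_range A = num_range_ge 0 A"
  by (auto simp: num_range_def num_range_ge_def)

lemma W_ge_eq_image:
  assumes "0 \<le> r"
  shows "W_ge r A = (\<lambda>w. (Re w, Im w)) ` num_range_ge r A"
proof -
  have "h = norm (A *v x)" if "r \<le> h" "h^2 = (norm (A *v x))^2" for h x
    using that assms by (metis norm_ge_zero order_trans power2_eq_iff_nonneg)
  then show ?thesis unfolding W_ge_def DW_def num_range_ge_def by (auto simp: image_iff)
qed

lemma r_sectorial_iff:
  assumes "0 \<le> r"
  shows "r_sectorial r A \<longleftrightarrow> 0 \<notin> num_range_ge r A"
proof -
  have "(0, 0) \<in> (\<lambda>w. (Re w, Im w)) ` S \<longleftrightarrow> 0 \<in> S" for S :: "complex set"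
  proof
    assume "(0, 0) \<in> (\<lambda>w. (Re w, Im w)) ` S"
    then obtain w where "w \<in> S" "Re w = 0" "Im w = 0" by auto
    then show "0 \<in> S" by (metis complex_eq_iff zero_complex.sel)
  qed (force)
  then show ?thesis unfolding r_sectorial_def W_ge_eq_image[OF assms] by simp
qed

lemma num_range_ge_le_sigma_max:
  assumes "w \<in> num_range_ge r A"
  shows "r \<le> sigma_max A"
proof -
  obtain x where "norm x = 1" "r \<le> norm (A *v x)" using assms by (auto simp: num_range_ge_def)
  moreover have "norm (A *v x) \<le> sigma_max A * norm x" unfolding sigma_max_def by (rule onorm) simp
  ultimately show ?thesis by simp
qed

lemma SOME_angle_arc_endpoints:
  assumes "0 \<notin> S" "angle_arc ((\<lambda>w. (Re w, Im w)) ` S) a b" "b - a < pi"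
  shows "(SOME a. \<exists>b. angle_arc ((\<lambda>w. (Re w, Im w)) ` S) a b) = a"
    and "(SOME b. \<exists>a. angle_arc ((\<lambda>w. (Re w, Im w)) ` S) a b) = b"
  using someI_ex[of "\<lambda>a. \<exists>b. angle_arc ((\<lambda>w. (Re w, Im w)) ` S) a b"]
    someI_ex[of "\<lambda>b. \<exists>a. angle_arc ((\<lambda>w. (Re w, Im w)) ` S) a b"]
    angle_arc_unique[OF assms(1,2) _ assms(3)] assms(2)
  by blast+

lemma psi_min_max_arc:
  fixes A :: "complex^'n^'n"
  assumes r: "0 \<le> r" "r_sectorial r A" and w: "w \<in> num_range_ge r A"
  obtains a b where "angle_arc ((\<lambda>w. (Re w, Im w)) ` num_range_ge r A) a b"
    "psi_min r A = ereal a" "psi_max r A = ereal b"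
proof -
  have z: "0 \<notin> num_range_ge r A" using r r_sectorial_iff by blast
  obtain a b where ab: "b - a < pi" "angle_arc ((\<lambda>w. (Re w, Im w)) ` num_range_ge r A) a b"
    using angle_arc_exists[OF num_range_ge_compact num_range_ge_convex[OF r(1)] _ z] w by blast
  have "psi_min r A = ereal a" "psi_max r A = ereal b"
    using SOME_angle_arc_endpoints[OF z ab(2,1)] num_range_ge_le_sigma_max[OF w]
    by (simp_all add: psi_min_def psi_max_def W_ge_eq_image[OF r(1)])
  then show ?thesis using ab(2) that by blast
qed

section \<open>Congruence to diagonal matrices\<close>

lemma cnj_tr_mult: "cnj_tr (X ** Y) = cnj_tr Y ** cnj_tr X"
  by (simp add: cnj_tr_def vec_eq_iff matrix_matrix_mult_def cnj_sum mult.commute)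

lemma cnj_tr_mat_1: "cnj_tr (mat 1 :: complex^'n^'n) = mat 1"
  by (simp add: cnj_tr_def vec_eq_iff mat_def)

lemma congruence_entry: "(cnj_tr P ** M ** P) $ i $ j = cinner (column i P) (M *v column j P)"
  by (simp add: cinner_def cnj_tr_def matrix_matrix_mult_def matrix_vector_mult_def column_def
      sum_distrib_left sum_distrib_right algebra_simps) (rule sum.swap)

lemma qform_congruence: "qform (cnj_tr T ** D ** T) x = cinner (T *v x) (D *v (T *v x))"
  unfolding qform_cinner by (simp add: matrix_vector_mul_assoc[symmetric] cinner_mult_cnj_tr)

definition diag_mat :: "('n \<Rightarrow> complex) \<Rightarrow> complex^'n^'n" where
  "diag_mat f = (\<chi> i j. if i = j then f i else 0)"

lemma diag_mat_mult_vec: "diag_mat f *v y = (\<chi> k. f k * y $ k)"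
proof -
  have "(\<Sum>j\<in>UNIV. (if k = j then f k else 0) * y $ j) = (\<Sum>j\<in>UNIV. if k = j then f k * y $ j else 0)"
    for k by (rule sum.cong) auto
  then show ?thesis by (simp add: diag_mat_def matrix_vector_mult_def vec_eq_iff)
qed

lemma diag_mat_mult: "diag_mat f ** M = (\<chi> k j. f k * M $ k $ j)"
proof -
  have "(\<Sum>l\<in>UNIV. (if k = l then f k else 0) * M $ l $ j) = (\<Sum>l\<in>UNIV. if k = l then f k * M $ l $ j else 0)"
    for k j by (rule sum.cong) auto
  then show ?thesis by (simp add: diag_mat_def matrix_matrix_mult_def vec_eq_iff)
qed

lemma invertible_diag_mat:
  assumes "\<And>k. f k \<noteq> 0"
  shows "invertible (diag_mat f)"
proof -
  have "diag_mat f ** diag_mat (\<lambda>k. inverse (f k)) = mat 1"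
    "diag_mat (\<lambda>k. inverse (f k)) ** diag_mat f = mat 1"
    unfolding diag_mat_mult using assms by (auto simp: vec_eq_iff diag_mat_def mat_def)
  then show ?thesis unfolding invertible_def by blast
qed

lemma congruence_diag_entry:
  "(cnj_tr T ** diag_mat f ** T) $ a $ b = (\<Sum>k\<in>UNIV. cnj (T $ k $ a) * f k * T $ k $ b)"
  unfolding congruence_entry diag_mat_mult_vec cinner_def column_def by (simp add: mult.assoc)

lemma qform_congruence_diag:
  "qform (cnj_tr T ** diag_mat f ** T) x = (\<Sum>k\<in>UNIV. of_real ((cmod ((T *v x) $ k))^2) * f k)"
  unfolding qform_congruence diag_mat_mult_vec cinner_def
  by (rule sum.cong) (simp_all add: mult.left_commute[of "cnj _"] mult.assoc cnj_mult_self)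

lemma congruence_diag_num_range_point:
  fixes T :: "complex^'n^'n"
  assumes "invertible T"
  shows "\<exists>w\<in>num_range (cnj_tr T ** diag_mat (\<lambda>i. cis (\<theta> i)) ** T).
    w = of_real (cmod w) * cis (\<theta> k)"
proof -
  obtain Ti where Ti: "T ** Ti = mat 1" using assms unfolding invertible_def by blast
  define u where "u = Ti *v axis k 1"
  have Tu: "T *v u = axis k 1" by (simp add: u_def matrix_vector_mul_assoc Ti)
  then have nu: "norm u > 0" by (auto simp: axis_eq_0_iff)
  define x where "x = of_real (1 / norm u) *s u"
  have x: "norm x = 1" unfolding x_def norm_smult_of_real using nu by simp
  have Tx: "(T *v x) $ j = (if j = k then of_real (1 / norm u) else 0)" for j
    by (simp add: x_def vector_scalar_commute Tu axis_def)
  define s where "s = (1 / norm u)^2"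
  have "qform (cnj_tr T ** diag_mat (\<lambda>i. cis (\<theta> i)) ** T) x
      = (\<Sum>j\<in>UNIV. if j = k then of_real s * cis (\<theta> k) else 0)"
    unfolding qform_congruence_diag by (rule sum.cong) (auto simp: Tx norm_divide s_def)
  also have "\<dots> = of_real s * cis (\<theta> k)" by simp
  finally have "of_real s * cis (\<theta> k) \<in> num_range (cnj_tr T ** diag_mat (\<lambda>i. cis (\<theta> i)) ** T)"
    using x unfolding num_range_def by (intro CollectI exI[of _ x]) simp
  moreover have "s > 0" using nu by (simp add: s_def)
  ultimately show ?thesis by (intro bexI[of _ "of_real s * cis (\<theta> k)"]) (simp_all add: norm_mult)
qed

lemma sectorial_decomp_angle_arc:
  fixes B T :: "complex^'n^'n"
  assumes D: "sectorial_decomp B T \<theta>"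
  shows "angle_arc ((\<lambda>w. (Re w, Im w)) ` num_range B) (Min (range \<theta>)) (Max (range \<theta>))"
proof -
  have inv: "invertible T" and B: "B = cnj_tr T ** diag_mat (\<lambda>i. cis (\<theta> i)) ** T"
    and sp: "Max (range \<theta>) - Min (range \<theta>) < pi"
    "- pi < (Max (range \<theta>) + Min (range \<theta>)) / 2" "(Max (range \<theta>) + Min (range \<theta>)) / 2 \<le> pi"
    using D by (simp_all add: sectorial_decomp_def diag_mat_def)
  have bnd: "Min (range \<theta>) \<le> \<theta> k \<and> \<theta> k \<le> Max (range \<theta>)" for k by simp
  obtain kmax kmin where k: "\<theta> kmax = Max (range \<theta>)" "\<theta> kmin = Min (range \<theta>)"
    using Max_in[of "range \<theta>"] Min_in[of "range \<theta>"] by (metis finite finite_imageI rangeE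
        range_eqI empty_iff)
  obtain Ti where Ti: "Ti ** T = mat 1" using inv unfolding invertible_def by blast
  have T_inj: "T *v x \<noteq> 0" if "x \<noteq> 0" for x
    by (metis Ti matrix_vector_mul_assoc matrix_vector_mul_lid matrix_vector_mult_0_right that)
  have "w \<noteq> 0 \<and> (\<exists>t. Min (range \<theta>) \<le> t \<and> t \<le> Max (range \<theta>) \<and> w = of_real (cmod w) * cis t)"
    if w: "w \<in> num_range B" for w
  proof -
    obtain x where x: "norm x = 1" "w = qform B x" using w by (auto simp: num_range_def)
    then have "T *v x \<noteq> 0" using T_inj by (metis norm_zero zero_neq_one)
    then obtain k0 where "(T *v x) $ k0 \<noteq> 0" by (metis vec_eq_iff zero_index)
    then show ?thesis
      unfolding x(2) B qform_congruence_diag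
      by (intro cis_positive_combination_in_arc[of _ k0]) (use bnd sp in auto)
  qed
  then show ?thesis unfolding angle_arc_image_iff
    using sp bnd[of kmax] k congruence_diag_num_range_point[OF inv, of \<theta> kmin]
      congruence_diag_num_range_point[OF inv, of \<theta> kmax]
    by (auto simp: B add.commute)
qed

section \<open>Simultaneous diagonalisation of Hermitian forms\<close>

definition hermitian :: "complex^'n^'n \<Rightarrow> bool" where
  "hermitian M \<longleftrightarrow> cnj_tr M = M"

lemma hermitian_cinner_move: "hermitian M \<Longrightarrow> cinner u (M *v w) = cinner (M *v u) w"
  using cinner_cnj_tr[of u M w] by (simp add: hermitian_def)

lemma hermitian_cinner_swap: "hermitian M \<Longrightarrow> cinner u (M *v w) = cnj (cinner w (M *v u))"
  using hermitian_cinner_move[of M u w] cinner_commute[of "M *v u" w] by simp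

lemma hermitian_qform_real: "hermitian M \<Longrightarrow> qform M x = of_real (Re (qform M x))"
  using hermitian_cinner_swap[of M x x] unfolding qform_cinner
  by (metis Reals_cnj_iff complex_is_Real_iff complex_eq_iff of_real_Re)

lemma hermitian_qform_line:
  assumes "hermitian M"
  shows "Re (qform M (v + (of_real t :: complex) *s w)) =
    Re (qform M v) + 2 * t * Re (cinner v (M *v w)) + t^2 * Re (qform M w)"
  unfolding qform_add qform_scale unfolding qform_cinner vector_scalar_commute
    cinner_scale_left cinner_scale_right hermitian_cinner_swap[OF assms, of w v]
  by (simp add: power2_eq_square algebra_simps)

lemma cnj_tr_scaleR_diff: "cnj_tr (\<mu> *\<^sub>R H - K) = \<mu> *\<^sub>R cnj_tr H - cnj_tr K"
  by (simp add: cnj_tr_def vec_eq_iff)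

lemma hermitian_scaleR_diff:
  "hermitian H \<Longrightarrow> hermitian K \<Longrightarrow> hermitian (\<mu> *\<^sub>R H - K)"
  unfolding hermitian_def cnj_tr_scaleR_diff by simp

lemma scaleR_diff_mult_vec:
  fixes H K :: "complex^'n^'m"
  shows "(\<mu> *\<^sub>R H - K) *v w = of_real \<mu> *s (H *v w) - K *v w"
  by (simp add: vec_eq_iff matrix_vector_mult_def sum_distrib_left sum_subtractf
      scaleR_conv_of_real[where 'a = complex] left_diff_distrib mult.assoc)

lemma cinner_scaleR_diff_mult:
  "cinner u ((\<mu> *\<^sub>R H - K) *v w) = of_real \<mu> * cinner u (H *v w) - cinner u (K *v w)"
  by (simp add: scaleR_diff_mult_vec cinner_diff_right cinner_scale_right)

lemma linear_coeff_zero_if_quadratic_nonneg: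
  fixes a b :: real
  assumes "\<And>t. 0 \<le> a * t^2 + 2 * b * t"
  shows "b = 0"
proof (rule ccontr)
  assume b: "b \<noteq> 0"
  define s where "s = \<bar>a\<bar> + 1"
  have s: "s > 0" "a - 2 * s < 0" by (auto simp: s_def)
  have "a * (- b / s)^2 + 2 * b * (- b / s) = (b^2 / s^2) * (a - 2 * s)"
    using s by (simp add: field_simps power2_eq_square)
  also have "\<dots> < 0" using b s by (intro mult_pos_neg) simp_all
  finally show False using assms[of "- b / s"] by simp
qed

definition orth_compl :: "(complex^'n) set \<Rightarrow> (complex^'n) set" where
  "orth_compl U = {w. \<forall>u\<in>U. cinner u w = 0}"

lemma orth_compl_add: "w1 \<in> orth_compl U \<Longrightarrow> w2 \<in> orth_compl U \<Longrightarrow> w1 + w2 \<in> orth_compl U"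
  by (simp add: orth_compl_def cinner_add_right)

lemma orth_compl_scale: "w \<in> orth_compl U \<Longrightarrow> c *s w \<in> orth_compl U"
  by (simp add: orth_compl_def cinner_scale_right)

lemma closed_orth_compl: "closed (orth_compl U)"
proof -
  have "orth_compl U = (\<Inter>u\<in>U. {w. cinner u w = 0})" by (auto simp: orth_compl_def)
  moreover have "closed {w. cinner u w = 0}" for u :: "complex^'n"
    unfolding cinner_def by (intro closed_Collect_eq continuous_intros)
  ultimately show ?thesis by auto
qed

text \<open>Complex orthogonality to u is real orthogonality to u and to \<i> u.\<close>
lemma orth_compl_nontrivial:
  fixes U :: "(complex^'n) set"
  assumes "finite U" "card U < CARD('n)"
  obtains w where "w \<in> orth_compl U" "w \<noteq> 0"
proof -
  define S where "S = U \<union> (\<lambda>u. \<i> *s u) ` U"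
  have "dim S \<le> card S" by (rule dim_le_card') (simp add: S_def assms(1))
  also have "card S \<le> card U + card U"
    using card_Un_le[of U "(\<lambda>u. \<i> *s u) ` U"] card_image_le[OF assms(1), of "\<lambda>u. \<i> *s u"]
    unfolding S_def by linarith
  also have "\<dots> < DIM(complex^'n)" using assms(2) by simp
  finally obtain x where x: "x \<noteq> 0" "\<And>y. y \<in> span S \<Longrightarrow> orthogonal x y"
    using orthogonal_to_subspace_exists by blast
  have "cinner u x = 0" if "u \<in> U" for u
  proof -
    have "inner u x = 0" "inner (\<i> *s u) x = 0"
      using x(2)[of u] x(2)[of "\<i> *s u"] that
      by (simp_all add: S_def span_base orthogonal_def inner_commute)
    then have "Re (cinner u x) = 0" "Im (cinner u x) = 0"
      by (simp_all only: flip: Re_cinner) (simp_all add: cinner_scale_left)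
    then show ?thesis by (simp add: complex_eq_iff)
  qed
  then show ?thesis using that x(1) by (auto simp: orth_compl_def)
qed

lemma qform_coercive:
  fixes H :: "complex^'n^'n"
  assumes pos: "\<And>x. x \<noteq> 0 \<Longrightarrow> Re (qform H x) > 0"
  obtains c where "c > 0" "\<And>x. c * (norm x)^2 \<le> Re (qform H x)"
proof -
  have cont: "continuous_on (sphere 0 1) (\<lambda>x. Re (qform H x))"
    by (intro continuous_intros continuous_on_qform)
  obtain x0 where x0: "x0 \<in> sphere 0 1" "\<And>x. x \<in> sphere 0 1 \<Longrightarrow> Re (qform H x0) \<le> Re (qform H x)"
    using continuous_attains_inf[OF compact_sphere _ cont] by auto
  have "Re (qform H x0) > 0" using x0(1) pos by (metis mem_sphere_0 norm_zero zero_neq_one)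
  moreover have "Re (qform H x0) * (norm x)^2 \<le> Re (qform H x)" for x
  proof (cases "x = 0")
    case False
    define xh where "xh = (of_real (1 / norm x) :: complex) *s x"
    have "norm xh = 1" unfolding xh_def norm_smult_of_real using False by simp
    moreover have "qform H xh = of_real (1 / norm x * (1 / norm x)) * qform H x"
      unfolding xh_def by (rule qform_scale_of_real)
    ultimately have "Re (qform H x0) \<le> Re (qform H x) / (norm x)^2"
      using x0(2)[of xh] by (simp add: power2_eq_square)
    then show ?thesis using False by (simp add: field_simps)
  qed (simp add: qform_def)
  ultimately show ?thesis using that by blast
qed

lemma compact_orth_compl_unit_sphere:
  fixes H :: "complex^'n^'n"
  assumes pos: "\<And>x. x \<noteq> 0 \<Longrightarrow> Re (qform H x) > 0"
  shows "compact (orth_compl U \<inter> {w. Re (qform H w) = 1})"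
proof -
  obtain c where c: "c > 0" "\<And>x. c * (norm x)^2 \<le> Re (qform H x)" using qform_coercive pos by blast
  have "norm w \<le> sqrt (1 / c)" if "w \<in> orth_compl U \<inter> {w. Re (qform H w) = 1}" for w
  proof (rule real_le_rsqrt)
    have "c * (norm w)^2 \<le> 1" using c(2)[of w] that by simp
    then show "(norm w)^2 \<le> 1 / c" using c(1) by (simp add: field_simps)
  qed
  then have "bounded (orth_compl U \<inter> {w. Re (qform H w) = 1})" unfolding bounded_iff by blast
  moreover have "closed (orth_compl U \<inter> {w. Re (qform H w) = 1})"
    by (intro closed_Int closed_orth_compl closed_Collect_eq continuous_intros continuous_on_qform)
  ultimately show ?thesis by (simp add: compact_eq_bounded_closed)
qed

lemma qform_max_on_unit_sphere:
  fixes H K :: "complex^'n^'n"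
  assumes pos: "\<And>x. x \<noteq> 0 \<Longrightarrow> Re (qform H x) > 0"
    and w0: "w0 \<in> orth_compl U" "w0 \<noteq> 0"
  obtains v0 where "v0 \<in> orth_compl U" "Re (qform H v0) = 1"
    "\<And>w. w \<in> orth_compl U \<Longrightarrow> Re (qform K w) \<le> Re (qform K v0) * Re (qform H w)"
proof -
  define M where "M = orth_compl U \<inter> {w. Re (qform H w) = 1}"
  define scale where "scale w = (of_real (1 / sqrt (Re (qform H w))) :: complex) *s w" for w
  have scale_qform: "Re (qform N (scale w)) = Re (qform N w) / Re (qform H w)"
    if "w \<noteq> 0" for N w
  proof -
    have "sqrt (Re (qform H w)) * sqrt (Re (qform H w)) = Re (qform H w)"
      using pos[OF that] by simp
    then show ?thesis unfolding scale_def qform_scale_of_real by simp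
  qed
  have scale_M: "scale w \<in> M" if "w \<in> orth_compl U" "w \<noteq> 0" for w
  proof -
    have "scale w \<in> orth_compl U" unfolding scale_def by (rule orth_compl_scale[OF that(1)])
    moreover have "Re (qform H (scale w)) = 1" using scale_qform[OF that(2), of H] pos[OF that(2)] by simp
    ultimately show ?thesis by (simp add: M_def)
  qed
  have compact: "compact M" unfolding M_def using pos by (rule compact_orth_compl_unit_sphere)
  have nonempty: "M \<noteq> {}" using scale_M[OF w0] by blast
  have cont: "continuous_on M (\<lambda>w. Re (qform K w))"
    by (intro continuous_intros continuous_on_qform)
  obtain v0 where v0: "v0 \<in> M" "\<And>w. w \<in> M \<Longrightarrow> Re (qform K w) \<le> Re (qform K v0)"
    using continuous_attains_sup[OF compact nonempty cont] by blast
  have ineq: "Re (qform K w) \<le> Re (qform K v0) * Re (qform H w)" if "w \<in> orth_compl U" for w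
  proof (cases "w = 0")
    case False
    have "Re (qform K w) / Re (qform H w) \<le> Re (qform K v0)"
      using v0(2)[OF scale_M[OF that False]] scale_qform[OF False, of K] by simp
    then show ?thesis using pos[OF False] by (simp add: field_simps)
  qed (simp add: qform_def)
  have "v0 \<in> orth_compl U" "Re (qform H v0) = 1" using v0(1) by (simp_all add: M_def)
  then show ?thesis using ineq by (rule that)
qed

text \<open>A positive semidefinite form vanishing at v0 has v0 in its radical: otherwise the form would
  be negative on a line through v0.\<close>
lemma psd_form_radical:
  assumes R: "hermitian R" and v0: "v0 \<in> orth_compl U" "Re (qform R v0) = 0"
    and psd: "\<And>w. w \<in> orth_compl U \<Longrightarrow> 0 \<le> Re (qform R w)"
    and w: "w \<in> orth_compl U"
  shows "cinner v0 (R *v w) = 0"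
proof -
  have Re0: "Re (cinner v0 (R *v w')) = 0" if "w' \<in> orth_compl U" for w'
  proof (rule linear_coeff_zero_if_quadratic_nonneg)
    fix t
    have "0 \<le> Re (qform R (v0 + (of_real t :: complex) *s w'))"
      by (intro psd orth_compl_add orth_compl_scale v0 that)
    then show "0 \<le> Re (qform R w') * t^2 + 2 * Re (cinner v0 (R *v w')) * t"
      unfolding hermitian_qform_line[OF R] v0(2) by (simp add: algebra_simps)
  qed
  have "Re (cinner v0 (R *v w)) = 0" "Re (\<i> * cinner v0 (R *v w)) = 0"
    using Re0[OF w] Re0[OF orth_compl_scale[OF w, of \<i>]]
    by (simp_all add: vector_scalar_commute cinner_scale_right)
  then show ?thesis by (simp add: complex_eq_iff)
qed

lemma rayleigh_eigenvector:
  fixes H K :: "complex^'n^'n"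
  assumes H: "hermitian H" and K: "hermitian K" and pos: "\<And>x. x \<noteq> 0 \<Longrightarrow> Re (qform H x) > 0"
    and w0: "w0 \<in> orth_compl U" "w0 \<noteq> 0"
  obtains v0 \<mu> where "v0 \<in> orth_compl U" "qform H v0 = 1"
    "\<And>w. w \<in> orth_compl U \<Longrightarrow> cinner v0 (K *v w) = of_real \<mu> * cinner v0 (H *v w)"
proof -
  obtain v0 where v0: "v0 \<in> orth_compl U" "Re (qform H v0) = 1"
    "\<And>w. w \<in> orth_compl U \<Longrightarrow> Re (qform K w) \<le> Re (qform K v0) * Re (qform H w)"
    using qform_max_on_unit_sphere[OF pos w0] by blast
  define \<mu> where "\<mu> = Re (qform K v0)"
  have "cinner v0 ((\<mu> *\<^sub>R H - K) *v w) = 0" if "w \<in> orth_compl U" for w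
    using v0 that unfolding \<mu>_def
    by (intro psd_form_radical[OF hermitian_scaleR_diff[OF H K]])
      (simp_all add: qform_cinner cinner_scaleR_diff_mult)
  then have "cinner v0 (K *v w) = of_real \<mu> * cinner v0 (H *v w)" if "w \<in> orth_compl U" for w
    using that by (simp add: cinner_scaleR_diff_mult)
  moreover have "qform H v0 = 1" using hermitian_qform_real[OF H, of v0] v0(2) by simp
  ultimately show ?thesis using v0(1) that by blast
qed

definition simultaneous_orthonormal ::
    "complex^'n^'n \<Rightarrow> complex^'n^'n \<Rightarrow> ('n \<Rightarrow> complex^'n) \<Rightarrow> 'n set \<Rightarrow> bool" where
  "simultaneous_orthonormal H K v I \<longleftrightarrow>
     (\<forall>i\<in>I. \<forall>j\<in>I. cinner (v i) (H *v v j) = (if i = j then 1 else 0)) \<and>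
     (\<forall>i\<in>I. \<forall>j\<in>I. i \<noteq> j \<longrightarrow> cinner (v i) (K *v v j) = 0) \<and>
     (\<forall>w\<in>orth_compl ((\<lambda>i. H *v v i) ` I). \<forall>i\<in>I. cinner (v i) (K *v w) = 0)"

text \<open>The last clause says that K maps the H-orthogonal complement of the family into itself;
  it is the invariant that lets the family be extended.\<close>
lemma simultaneous_orthonormal_insert:
  assumes H: "hermitian H" and K: "hermitian K"
    and v: "simultaneous_orthonormal H K v I" and j: "j \<notin> I"
    and v0: "v0 \<in> orth_compl ((\<lambda>i. H *v v i) ` I)" "qform H v0 = 1"
    and eig: "\<And>w. w \<in> orth_compl ((\<lambda>i. H *v v i) ` I) \<Longrightarrow>
      cinner v0 (K *v w) = of_real \<mu> * cinner v0 (H *v w)"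
  shows "simultaneous_orthonormal H K (v(j := v0)) (insert j I)"
proof -
  have v1: "cinner (v i) (H *v v k) = (if i = k then 1 else 0)" if "i \<in> I" "k \<in> I" for i k
    using v that unfolding simultaneous_orthonormal_def by simp
  have v2: "cinner (v i) (K *v v k) = 0" if "i \<in> I" "k \<in> I" "i \<noteq> k" for i k
    using v that unfolding simultaneous_orthonormal_def by simp
  have v3: "cinner (v i) (K *v w) = 0" if "w \<in> orth_compl ((\<lambda>i. H *v v i) ` I)" "i \<in> I" for w i
    using v that unfolding simultaneous_orthonormal_def by simp
  have orth_iff: "w \<in> orth_compl ((\<lambda>i. H *v v i) ` I) \<longleftrightarrow> (\<forall>i\<in>I. cinner (v i) (H *v w) = 0)" for w
    by (auto simp: orth_compl_def hermitian_cinner_move[OF H])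
  have H0: "cinner (v i) (H *v v0) = 0" "cinner v0 (H *v v i) = 0" if "i \<in> I" for i
    using v0(1) that hermitian_cinner_swap[OF H, of v0 "v i"] by (auto simp: orth_iff)
  have K0: "cinner (v i) (K *v v0) = 0" "cinner v0 (K *v v i) = 0" if "i \<in> I" for i
    using v3[OF v0(1) that] hermitian_cinner_swap[OF K, of v0 "v i"] by auto
  let ?v = "v(j := v0)"
  have A: "cinner (?v i) (H *v ?v k) = (if i = k then 1 else 0)" if "i \<in> insert j I" "k \<in> insert j I" for i k
  proof (cases "i = j")
    case True
    then show ?thesis using that H0(2) v0(2) j by (cases "k = j") (auto simp: qform_cinner)
  next
    case False
    then show ?thesis using that H0(1) v1 by (cases "k = j") auto
  qed
  have B: "cinner (?v i) (K *v ?v k) = 0" if "i \<in> insert j I" "k \<in> insert j I" "i \<noteq> k" for i k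
  proof (cases "i = j")
    case True
    then show ?thesis using that K0(2) by auto
  next
    case False
    then show ?thesis using that K0(1) v2 by (cases "k = j") auto
  qed
  have C: "cinner (?v i) (K *v w) = 0"
    if w: "w \<in> orth_compl ((\<lambda>i. H *v ?v i) ` insert j I)" and i: "i \<in> insert j I" for w i
  proof -
    have "(\<lambda>i. H *v v i) ` I = (\<lambda>i. H *v ?v i) ` I" using j by (intro image_cong) auto
    then have wV: "w \<in> orth_compl ((\<lambda>i. H *v v i) ` I)" using w by (auto simp: orth_compl_def)
    have "cinner v0 (H *v w) = 0" using w by (simp add: orth_compl_def hermitian_cinner_move[OF H])
    then show ?thesis using i v3[OF wV] eig[OF wV] by (cases "i = j") auto
  qed
  show ?thesis unfolding simultaneous_orthonormal_def
    by (intro conjI ballI impI) (rule A B C; assumption)+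
qed

lemma simultaneous_orthonormal_exists:
  fixes H K :: "complex^'n^'n"
  assumes H: "hermitian H" and K: "hermitian K" and pos: "\<And>x. x \<noteq> 0 \<Longrightarrow> Re (qform H x) > 0"
  shows "\<exists>v. simultaneous_orthonormal H K v I"
proof -
  have "finite I" by simp
  then show ?thesis
  proof (induction I rule: finite_induct)
    case empty
    then show ?case by (simp add: simultaneous_orthonormal_def)
  next
    case (insert j I)
    then obtain v where v: "simultaneous_orthonormal H K v I" by blast
    have "card ((\<lambda>i. H *v v i) ` I) < CARD('n)"
      using card_image_le[OF insert(1), of "\<lambda>i. H *v v i"] card_mono[of UNIV "insert j I"] insert(1,2)
      by simp
    then obtain w0 where "w0 \<in> orth_compl ((\<lambda>i. H *v v i) ` I)" "w0 \<noteq> 0"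
      using orth_compl_nontrivial insert(1) by blast
    then obtain v0 \<mu> where "v0 \<in> orth_compl ((\<lambda>i. H *v v i) ` I)" "qform H v0 = 1"
      "\<And>w. w \<in> orth_compl ((\<lambda>i. H *v v i) ` I) \<Longrightarrow>
        cinner v0 (K *v w) = of_real \<mu> * cinner v0 (H *v w)"
      using rayleigh_eigenvector[OF H K pos] by metis
    then show ?case using simultaneous_orthonormal_insert[OF H K v insert(2)] by blast
  qed
qed

definition herm_re :: "complex^'n^'n \<Rightarrow> complex^'n^'n" where
  "herm_re M = (\<chi> i j. (M $ i $ j + cnj (M $ j $ i)) / 2)"

definition herm_im :: "complex^'n^'n \<Rightarrow> complex^'n^'n" where
  "herm_im M = (\<chi> i j. (M $ i $ j - cnj (M $ j $ i)) / (2 * \<i>))"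

lemma hermitian_herm_re: "hermitian (herm_re M)"
  by (simp add: hermitian_def herm_re_def cnj_tr_def vec_eq_iff add.commute)

lemma hermitian_herm_im: "hermitian (herm_im M)"
  by (simp add: hermitian_def herm_im_def cnj_tr_def vec_eq_iff field_simps)

lemma cinner_herm_re_im:
  "cinner u (M *v w) = cinner u (herm_re M *v w) + \<i> * cinner u (herm_im M *v w)"
proof -
  have "M *v w = herm_re M *v w + \<i> *s (herm_im M *v w)"
    by (simp add: vec_eq_iff matrix_vector_mult_def herm_re_def herm_im_def sum_distrib_left
        field_simps flip: sum.distrib)
  then show ?thesis by (simp add: cinner_add_right cinner_scale_right)
qed

text \<open>With M = H + \<i> K, a family that is H-orthonormal and K-orthogonal makes the congruence
  diagonal with entries 1 + \<i> \<mu>.\<close>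
lemma accretive_congruent_diag:
  fixes M :: "complex^'n^'n"
  assumes pos: "\<And>x. x \<noteq> 0 \<Longrightarrow> Re (qform M x) > 0"
  obtains P :: "complex^'n^'n" and \<mu> :: "'n \<Rightarrow> real"
  where "invertible P" "cnj_tr P ** M ** P = diag_mat (\<lambda>k. 1 + \<i> * of_real (\<mu> k))"
proof -
  define H where "H = herm_re M"
  define K where "K = herm_im M"
  have HK: "hermitian H" "hermitian K" by (simp_all add: H_def K_def hermitian_herm_re hermitian_herm_im)
  have "Im (qform K x) = 0" for x by (metis hermitian_qform_real[OF HK(2)] Im_complex_of_real)
  then have "Re (qform H x) = Re (qform M x)" for x
    using cinner_herm_re_im[of x M x] by (simp add: qform_cinner H_def K_def)
  then obtain v where v: "simultaneous_orthonormal H K v UNIV"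
    using simultaneous_orthonormal_exists[OF HK] pos by metis
  define P :: "complex^'n^'n" where "P = (\<chi> k i. v i $ k)"
  have col: "column i P = v i" for i by (simp add: P_def column_def vec_eq_iff)
  have "cnj_tr P ** H ** P = mat 1"
    using v by (simp add: simultaneous_orthonormal_def vec_eq_iff congruence_entry col mat_def)
  then have "invertible P" using invertible_left_inverse by metis
  moreover have "cnj_tr P ** M ** P = diag_mat (\<lambda>k. 1 + \<i> * of_real (Re (qform K (v k))))"
    using v hermitian_qform_real[OF HK(2)]
    by (auto simp: vec_eq_iff congruence_entry col cinner_herm_re_im[of _ M] diag_mat_def
        simultaneous_orthonormal_def qform_cinner H_def K_def)
  ultimately show ?thesis by (rule that[of P "\<lambda>k. Re (qform K (v k))"])
qed

section \<open>Existence and uniqueness of the phases\<close>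

lemma sectorial_rotation_accretive:
  fixes B :: "complex^'n^'n"
  assumes "sectorial B"
  obtains c where "c \<noteq> 0" "\<And>x. x \<noteq> 0 \<Longrightarrow> Re (c * qform B x) > 0"
proof -
  have "0 \<notin> num_range_ge 0 B" using assms by (simp add: sectorial_def num_range_eq_num_range_ge_0)
  moreover have "convex (num_range_ge 0 B)" by (rule num_range_ge_convex) simp
  ultimately obtain d b0 where d: "d \<noteq> 0" "0 < b0" "\<And>w. w \<in> num_range_ge 0 B \<Longrightarrow> inner d w > b0"
    using separating_hyperplane_closed_0 compact_imp_closed[OF num_range_ge_compact] by metis
  have "Re (cnj d * qform B x) > 0" if "x \<noteq> 0" for x
  proof -
    define xh where "xh = (of_real (1 / norm x) :: complex) *s x"
    have "norm xh = 1" using that unfolding xh_def norm_smult_of_real by simp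
    then have "qform B xh \<in> num_range_ge 0 B" by (auto simp: num_range_ge_def)
    then have "0 < Re (cnj d * qform B xh)" using d(2,3) by (fastforce simp: inner_complex_def)
    also have "Re (cnj d * qform B xh) = Re (cnj d * qform B x) / (norm x)^2"
      unfolding xh_def qform_scale_of_real by (simp add: power2_eq_square)
    finally show ?thesis by (simp add: zero_less_divide_iff)
  qed
  then show ?thesis using d(1) that[of "cnj d"] by simp
qed

lemma congruence_inverse:
  assumes "P ** Q = mat 1" "cnj_tr P ** M ** P = D"
  shows "M = cnj_tr Q ** D ** Q"
proof -
  have "cnj_tr Q ** (cnj_tr P ** M ** P) ** Q = cnj_tr (P ** Q) ** M ** (P ** Q)"
    by (simp add: matrix_mul_assoc cnj_tr_mult)
  then show ?thesis using assms by (simp add: cnj_tr_mat_1)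
qed

lemma congruence_diag_unit_modulus:
  fixes T :: "complex^'n^'n"
  assumes T: "invertible T" and f: "\<And>k. f k = of_real (\<rho> k) * cis (\<phi> k)" and \<rho>: "\<And>k. \<rho> k > 0"
  obtains T' where "invertible T'"
    "cnj_tr T ** diag_mat f ** T = cnj_tr T' ** diag_mat (\<lambda>k. cis (\<phi> k)) ** T'"
proof
  define s where "s k = (of_real (sqrt (\<rho> k)) :: complex)" for k
  show "invertible (diag_mat s ** T)"
    by (intro invertible_mult[OF invertible_diag_mat T]) (simp add: s_def less_imp_neq[OF \<rho>, symmetric])
  have ss: "of_real (\<rho> k) = cnj (s k) * s k" for k using \<rho>[of k] by (simp add: s_def flip: of_real_mult)
  have entry: "cnj (T $ k $ a) * f k * T $ k $ b = cnj (s k * T $ k $ a) * cis (\<phi> k) * (s k * T $ k $ b)"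
    for k a b unfolding f ss by (simp add: mult_ac)
  then show "cnj_tr T ** diag_mat f ** T = cnj_tr (diag_mat s ** T) ** diag_mat (\<lambda>k. cis (\<phi> k)) ** (diag_mat s ** T)"
    by (simp only: vec_eq_iff congruence_diag_entry diag_mat_mult vec_lambda_beta entry) simp
qed

lemma angles_shift_into_branch:
  fixes \<phi> :: "'n::finite \<Rightarrow> real"
  assumes "\<And>k. L < \<phi> k" "\<And>k. \<phi> k < L + pi"
  obtains \<theta> where "\<And>k. cis (\<theta> k) = cis (\<phi> k)" "Max (range \<theta>) - Min (range \<theta>) < pi"
    "- pi < (Max (range \<theta>) + Min (range \<theta>)) / 2" "(Max (range \<theta>) + Min (range \<theta>)) / 2 \<le> pi"
proof -
  obtain k1 k2 where k: "\<phi> k1 = Max (range \<phi>)" "\<phi> k2 = Min (range \<phi>)"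
    using Max_in[of "range \<phi>"] Min_in[of "range \<phi>"] by (metis finite finite_imageI rangeE
        range_eqI empty_iff)
  obtain m :: int where m: "- pi < (Max (range \<phi>) + Min (range \<phi>)) / 2 + 2 * pi * real_of_int m"
    "(Max (range \<phi>) + Min (range \<phi>)) / 2 + 2 * pi * real_of_int m \<le> pi"
    using exists_2pi_shift_into_branch by blast
  define \<theta> where "\<theta> k = \<phi> k + 2 * pi * real_of_int m" for k
  have "Max (range \<theta>) = Max (range \<phi>) + 2 * pi * real_of_int m"
    "Min (range \<theta>) = Min (range \<phi>) + 2 * pi * real_of_int m"
    unfolding \<theta>_def by (rule Max_add_commute Min_add_commute; simp)+
  moreover have "Max (range \<phi>) - Min (range \<phi>) < pi"
    using assms[of k1] assms[of k2] k by (metis add.commute diff_less_eq less_trans)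
  ultimately show ?thesis
  proof (intro that)
    show "cis (\<theta> k) = cis (\<phi> k)" for k by (simp add: \<theta>_def cis_add_2pi_int)
  qed (use m in \<open>simp_all add: field_simps\<close>)
qed

lemma polar_accretive_quotient:
  "(1 + \<i> * of_real l) / c = of_real (cmod (1 + \<i> * of_real l) / cmod c) * cis (arctan l - Arg c)"
proof -
  have z: "1 + \<i> * of_real l = of_real (cmod (1 + \<i> * of_real l)) * cis (arctan l)"
    using polar_arctan[of "1 + \<i> * of_real l"] by simp
  have c: "c = of_real (cmod c) * cis (Arg c)" by (metis rcis_cmod_Arg rcis_def)
  have "(1 + \<i> * of_real l) / c
      = (of_real (cmod (1 + \<i> * of_real l)) * cis (arctan l)) / (of_real (cmod c) * cis (Arg c))"
    by (simp only: z[symmetric] c[symmetric])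
  also have "\<dots> = of_real (cmod (1 + \<i> * of_real l) / cmod c) * (cis (arctan l) / cis (Arg c))"
    by (simp only: of_real_divide times_divide_times_eq)
  finally show ?thesis by (simp only: cis_divide)
qed

lemma congruence_diag_divide:
  assumes "(\<chi> i j. c * B $ i $ j) = cnj_tr Q ** diag_mat g ** Q" "c \<noteq> 0"
  shows "B = cnj_tr Q ** diag_mat (\<lambda>k. g k / c) ** Q"
proof -
  have "B $ a $ b = (cnj_tr Q ** diag_mat (\<lambda>k. g k / c) ** Q) $ a $ b" for a b
  proof -
    have "c * B $ a $ b = (\<Sum>k\<in>UNIV. cnj (Q $ k $ a) * g k * Q $ k $ b)"
      using arg_cong[OF assms(1), of "\<lambda>N. N $ a $ b"] by (simp add: congruence_diag_entry)
    then have "B $ a $ b = (\<Sum>k\<in>UNIV. cnj (Q $ k $ a) * g k * Q $ k $ b) / c"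
      using assms(2) by (simp add: eq_divide_eq mult.commute)
    also have "\<dots> = (\<Sum>k\<in>UNIV. cnj (Q $ k $ a) * (g k / c) * Q $ k $ b)"
      by (simp add: sum_divide_distrib)
    finally show ?thesis by (simp only: congruence_diag_entry)
  qed
  then show ?thesis by (simp add: vec_eq_iff)
qed

lemma sectorial_congruent_diag:
  fixes B :: "complex^'n^'n"
  assumes "sectorial B"
  obtains Q :: "complex^'n^'n" and \<mu> :: "'n \<Rightarrow> real" and c
  where "invertible Q" "c \<noteq> 0" "B = cnj_tr Q ** diag_mat (\<lambda>k. (1 + \<i> * of_real (\<mu> k)) / c) ** Q"
proof -
  obtain c where c: "c \<noteq> 0" "\<And>x. x \<noteq> 0 \<Longrightarrow> Re (c * qform B x) > 0"
    using sectorial_rotation_accretive[OF assms] by blast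
  define M :: "complex^'n^'n" where "M = (\<chi> i j. c * B $ i $ j)"
  have "qform M x = c * qform B x" for x
    by (simp add: M_def qform_def matrix_vector_mult_def sum_distrib_left mult_ac)
  then have "Re (qform M x) > 0" if "x \<noteq> 0" for x using c(2)[OF that] by simp
  then obtain P and \<mu> :: "'n \<Rightarrow> real"
    where P: "invertible P" "cnj_tr P ** M ** P = diag_mat (\<lambda>k. 1 + \<i> * of_real (\<mu> k))"
    by (rule accretive_congruent_diag)
  obtain Q where Q: "P ** Q = mat 1" "Q ** P = mat 1" using P(1) unfolding invertible_def by blast
  then have "invertible Q" unfolding invertible_def by blast
  moreover have "B = cnj_tr Q ** diag_mat (\<lambda>k. (1 + \<i> * of_real (\<mu> k)) / c) ** Q"
    using congruence_diag_divide[OF congruence_inverse[OF Q(1) P(2), unfolded M_def] c(1)] .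
  ultimately show ?thesis using that[OF _ c(1)] by blast
qed

text \<open>The diagonal entries (1 + \<i> \<mu> k) / c all have arguments in the open interval
  (-pi/2 - Arg c, pi/2 - Arg c) of length pi, which yields the branch conditions.\<close>
lemma sectorial_decomp_exists:
  fixes B :: "complex^'n^'n"
  assumes "sectorial B"
  obtains T \<theta> where "sectorial_decomp B T \<theta>"
proof -
  obtain Q and \<mu> :: "'n \<Rightarrow> real" and c where Q: "invertible Q" "c \<noteq> 0"
    "B = cnj_tr Q ** diag_mat (\<lambda>k. (1 + \<i> * of_real (\<mu> k)) / c) ** Q"
    using sectorial_congruent_diag[OF assms] by blast
  have polar: "(1 + \<i> * of_real (\<mu> k)) / c
      = of_real (cmod (1 + \<i> * of_real (\<mu> k)) / cmod c) * cis (arctan (\<mu> k) - Arg c)" for k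
    by (rule polar_accretive_quotient)
  have "1 + \<i> * of_real (\<mu> k) \<noteq> 0" for k by (simp add: complex_eq_iff)
  then have modulus: "cmod (1 + \<i> * of_real (\<mu> k)) / cmod c > 0" for k using Q(2) by simp
  obtain T where T: "invertible T"
    "cnj_tr Q ** diag_mat (\<lambda>k. (1 + \<i> * of_real (\<mu> k)) / c) ** Q
     = cnj_tr T ** diag_mat (\<lambda>k. cis (arctan (\<mu> k) - Arg c)) ** T"
    by (rule congruence_diag_unit_modulus[where f = "\<lambda>k. (1 + \<i> * of_real (\<mu> k)) / c"
          and \<rho> = "\<lambda>k. cmod (1 + \<i> * of_real (\<mu> k)) / cmod c" and \<phi> = "\<lambda>k. arctan (\<mu> k) - Arg c",
          OF Q(1) polar modulus])
  have bounds: "- pi / 2 - Arg c < arctan (\<mu> k) - Arg c" "arctan (\<mu> k) - Arg c < - pi / 2 - Arg c + pi"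
    for k using arctan_bounded[of "\<mu> k"] by simp_all
  obtain \<theta> where \<theta>: "\<And>k. cis (\<theta> k) = cis (arctan (\<mu> k) - Arg c)"
    "Max (range \<theta>) - Min (range \<theta>) < pi"
    "- pi < (Max (range \<theta>) + Min (range \<theta>)) / 2" "(Max (range \<theta>) + Min (range \<theta>)) / 2 \<le> pi"
    using angles_shift_into_branch[where \<phi> = "\<lambda>k. arctan (\<mu> k) - Arg c", OF bounds] by blast
  have "(\<lambda>k. cis (arctan (\<mu> k) - Arg c)) = (\<lambda>k. cis (\<theta> k))" using \<theta>(1) by simp
  then have "B = cnj_tr T ** diag_mat (\<lambda>k. cis (\<theta> k)) ** T" using Q(3) T(2) by simp
  then have "sectorial_decomp B T \<theta>"
    using T(1) \<theta>(2-4) by (simp add: sectorial_decomp_def diag_mat_def)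
  then show ?thesis by (rule that)
qed

text \<open>Different decompositions give the same arc of W(B), so the choices hidden in phase_max and
  phase_min are consistent.\<close>
lemma phases_from_sectorial_decomp:
  fixes B :: "complex^'n^'n"
  assumes sec: "sectorial B"
  obtains T \<theta> where "sectorial_decomp B T \<theta>"
    "phase_max B = Max (range \<theta>)" "phase_min B = Min (range \<theta>)"
proof -
  obtain T0 \<theta>0 where d0: "sectorial_decomp B T0 \<theta>0" using sectorial_decomp_exists[OF sec] by blast
  have "\<exists>T \<theta>. sectorial_decomp B T \<theta> \<and> phase_max B = Max (range \<theta>)"
    unfolding phase_max_def by (rule someI_ex) (use d0 in blast)
  then obtain T1 \<theta>1 where d1: "sectorial_decomp B T1 \<theta>1" "phase_max B = Max (range \<theta>1)" by blast
  have "\<exists>T \<theta>. sectorial_decomp B T \<theta> \<and> phase_min B = Min (range \<theta>)"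
    unfolding phase_min_def by (rule someI_ex) (use d0 in blast)
  then obtain T2 \<theta>2 where d2: "sectorial_decomp B T2 \<theta>2" "phase_min B = Min (range \<theta>2)" by blast
  have z: "0 \<notin> num_range B" using sec by (simp add: sectorial_def)
  have lt: "Max (range \<theta>0) - Min (range \<theta>0) < pi" using d0 by (simp add: sectorial_decomp_def)
  have "Max (range \<theta>1) = Max (range \<theta>0)" "Min (range \<theta>2) = Min (range \<theta>0)"
    using angle_arc_unique[OF z sectorial_decomp_angle_arc[OF d0] sectorial_decomp_angle_arc[OF d1(1)] lt]
      angle_arc_unique[OF z sectorial_decomp_angle_arc[OF d0] sectorial_decomp_angle_arc[OF d2(1)] lt]
    by simp_all
  then show ?thesis using d0 d1(2) d2(2) that by simp
qed

section \<open>Singularity of I + A B\<close>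

lemma not_invertible_kernel_vector:
  fixes A B :: "complex^'n^'n"
  assumes "\<not> invertible (mat 1 + A ** B)"
  obtains x where "x \<noteq> 0" "x = - (A *v (B *v x))"
proof -
  obtain x where "(mat 1 + A ** B) *v x = 0" "x \<noteq> 0"
    using assms unfolding invertible_left_inverse matrix_left_invertible_ker by blast
  then show ?thesis
    using that by (simp add: matrix_vector_mult_add_rdistrib matrix_vector_mul_assoc eq_neg_iff_add_eq_0)
qed

lemma kernel_vector_opposite_points:
  fixes A B :: "complex^'n^'n"
  assumes x: "x \<noteq> 0" "x = - (A *v (B *v x))"
  defines "u \<equiv> (of_real (1 / norm (B *v x)) :: complex) *s (B *v x)"
    and "xh \<equiv> (of_real (1 / norm x) :: complex) *s x"
  shows "B *v x \<noteq> 0" "norm u = 1" "norm xh = 1" "norm (A *v u) = norm x / norm (B *v x)"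
    and "qform A u = - of_real ((norm x / norm (B *v x))^2) * cnj (qform B xh)"
proof -
  show y: "B *v x \<noteq> 0"
  proof
    assume "B *v x = 0"
    then show False using x by simp
  qed
  then show "norm u = 1" unfolding u_def norm_smult_of_real by simp
  show "norm xh = 1" unfolding xh_def norm_smult_of_real using x(1) by simp
  have "A *v (B *v x) = - x" using x(2) by (metis minus_minus)
  then have Au: "A *v u = - ((of_real (1 / norm (B *v x)) :: complex) *s x)"
    by (simp add: u_def vector_scalar_commute)
  then show "norm (A *v u) = norm x / norm (B *v x)"
    unfolding Au norm_minus_cancel norm_smult_of_real by simp
  have "qform A u = - of_real ((1 / norm (B *v x))^2) * cinner (B *v x) x"
    unfolding qform_cinner Au by (simp add: u_def cinner_minus_right cinner_scale_left
        cinner_scale_right power2_eq_square)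
  also have "cinner (B *v x) x = cnj (qform B x)" unfolding qform_cinner by (rule cinner_commute)
  also have "qform B x = of_real ((norm x)^2) * qform B xh"
  proof -
    have "qform B xh = of_real (1 / norm x * (1 / norm x)) * qform B x"
      unfolding xh_def by (rule qform_scale_of_real)
    then show ?thesis using x(1) by (simp add: power2_eq_square)
  qed
  finally show "qform A u = - of_real ((norm x / norm (B *v x))^2) * cnj (qform B xh)"
    by (simp add: power_divide)
qed

lemma singular_opposite_points:
  fixes A B :: "complex^'n^'n"
  assumes "\<not> invertible (mat 1 + A ** B)" "0 \<le> r" "sigma_max B * r < 1"
  obtains u xh c where "qform A u \<in> num_range_ge r A" "qform B xh \<in> num_range B" "c > 0"
    "qform A u = - of_real c * cnj (qform B xh)"
proof -
  obtain x where x: "x \<noteq> 0" "x = - (A *v (B *v x))"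
    using assms(1) by (rule not_invertible_kernel_vector)
  define u where "u = (of_real (1 / norm (B *v x)) :: complex) *s (B *v x)"
  define xh where "xh = (of_real (1 / norm x) :: complex) *s x"
  note opp = kernel_vector_opposite_points[OF x, folded u_def xh_def]
  have "r * norm (B *v x) \<le> r * (sigma_max B * norm x)"
    using assms(2) unfolding sigma_max_def by (intro mult_left_mono onorm) simp_all
  also have "\<dots> < norm x" using assms(3) x(1) by (simp add: mult.assoc[symmetric] mult.commute[of r])
  finally have "r \<le> norm (A *v u)" using opp(1) by (simp add: opp(4) field_simps)
  then have "qform A u \<in> num_range_ge r A" using opp(2) by (auto simp: num_range_ge_def)
  moreover have "qform B xh \<in> num_range B" using opp(3) by (auto simp: num_range_def)
  moreover have "(norm x / norm (B *v x))^2 > 0" using x(1) opp(1) by simp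
  ultimately show ?thesis using opp(5) that by blast
qed

lemma opposite_polar_angles:
  assumes "w = - of_real c * cnj z" "c > 0" "w \<noteq> 0"
    and "w = of_real (cmod w) * cis \<psi>" "z = of_real (cmod z) * cis \<phi>"
  shows "cis (\<psi> + \<phi>) = -1"
proof -
  have cz: "cnj z = of_real (cmod z) * cis (- \<phi>)" by (subst assms(5)) (simp add: cis_cnj)
  have cw: "cmod w = c * cmod z" using assms(1,2) by (simp add: norm_mult)
  have "w = - (of_real c * (of_real (cmod z) * cis (- \<phi>)))" using assms(1) cz by simp
  also have "\<dots> = of_real (cmod w) * (- cis (- \<phi>))" by (simp add: cw)
  finally have "of_real (cmod w) * cis \<psi> = of_real (cmod w) * (- cis (- \<phi>))" using assms(4) by simp
  then have "cis \<psi> = - cis (- \<phi>)"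
    using assms(3) by (metis mult_minus_right mult_cancel_left norm_eq_zero of_real_eq_0_iff)
  have "cis (\<psi> + \<phi>) = cis \<psi> * cis \<phi>" by (simp add: cis_mult)
  also have "\<dots> = - (cis (- \<phi>) * cis \<phi>)" using \<open>cis \<psi> = - cis (- \<phi>)\<close> by simp
  also have "cis (- \<phi>) * cis \<phi> = 1" by (simp add: cis_mult)
  finally show ?thesis by simp
qed

lemma cis_neq_minus_1:
  assumes "- pi < s" "s < pi"
  shows "cis s \<noteq> -1"
proof
  assume "cis s = -1"
  then have "cos s = -1" by (simp add: complex_eq_iff)
  then obtain n :: int where n: "s = (2 * of_int n + 1) * pi" using cos_eq_minus1 by blast
  have "- 1 * pi < (2 * of_int n + 1) * pi" "(2 * of_int n + 1) * pi < 1 * pi" using assms n by simp_all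
  then have "- 1 < 2 * real_of_int n + 1" "2 * real_of_int n + 1 < 1"
    by (simp_all only: mult_less_cancel_right_pos[OF pi_gt_zero])
  then have "- 1 < n" "n < 0" by linarith+
  then show False by presburger
qed

theorem theorem5:
  fixes A B :: "complex^'n^'n"
  assumes "sectorial B"
    and "\<exists>r::real. r \<ge> 0 \<and> r_sectorial r A \<and>
           psi_max r A + ereal (phase_max B) < ereal pi \<and>
           psi_min r A + ereal (phase_min B) > ereal (- pi) \<and>
           sigma_max B * r < 1"
  shows "invertible (mat 1 + A ** B)"
proof (rule ccontr)
  assume singular: "\<not> invertible (mat 1 + A ** B)"
  obtain r where r: "r \<ge> 0" "r_sectorial r A" and hmax: "psi_max r A + ereal (phase_max B) < ereal pi"
    and hmin: "psi_min r A + ereal (phase_min B) > ereal (- pi)" and hs: "sigma_max B * r < 1"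
    using assms(2) by blast
  obtain u xh c where opp: "qform A u \<in> num_range_ge r A" "qform B xh \<in> num_range B" "c > 0"
    "qform A u = - of_real c * cnj (qform B xh)"
    using singular_opposite_points[OF singular r(1) hs] by blast
  obtain a b where ab: "angle_arc ((\<lambda>w. (Re w, Im w)) ` num_range_ge r A) a b"
    "psi_min r A = ereal a" "psi_max r A = ereal b"
    using psi_min_max_arc[OF r opp(1)] by blast
  obtain T \<theta> where th: "sectorial_decomp B T \<theta>"
    "phase_max B = Max (range \<theta>)" "phase_min B = Min (range \<theta>)"
    using phases_from_sectorial_decomp[OF assms(1)] by blast
  obtain \<psi> where \<psi>: "a \<le> \<psi>" "\<psi> \<le> b" "qform A u = of_real (cmod (qform A u)) * cis \<psi>"
    using angle_arc_member[OF ab(1) opp(1)] .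
  obtain \<phi> where \<phi>: "Min (range \<theta>) \<le> \<phi>" "\<phi> \<le> Max (range \<theta>)"
    "qform B xh = of_real (cmod (qform B xh)) * cis \<phi>"
    using angle_arc_member[OF sectorial_decomp_angle_arc[OF th(1)] opp(2)] .
  have "qform A u \<noteq> 0" using opp(1) r_sectorial_iff[OF r(1), of A] r(2) by auto
  then have "cis (\<psi> + \<phi>) = -1" by (rule opposite_polar_angles[OF opp(4,3) _ \<psi>(3) \<phi>(3)])
  moreover have "b + Max (range \<theta>) < pi" "- pi < a + Min (range \<theta>)"
    using hmax hmin unfolding ab(2,3) th(2,3) by simp_all
  then have "- pi < \<psi> + \<phi>" "\<psi> + \<phi> < pi" using \<psi>(1,2) \<phi>(1,2) by linarith+
  ultimately show False using cis_neq_minus_1 by blast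
qed

end
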